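(* Let $\mathcal L=\mathcal L^h_{N,M}$ and $\|\cdot\|_{\mathcal L}$ be as in the context. Then: (1) $\|\cdot\|_{\mathcal L}$ is a norm on $\mathcal L$; (2) this norm is stronger than the standard operator norm $\|\cdot\|_{\mathcal B}$ of bounded operators on $L^2([0,1)^N,\mathbb C^M)$; (3) convergence of a sequence in $\mathcal L$ with respect to $\|\cdot\|_{\mathcal L}$ is equivalent to uniform convergence of all its coefficient functions $\mathbf A_\alpha$; (4) $(\mathcal L,\|\cdot\|_{\mathcal L})$, with composition of operators as multiplication, is an associative (not necessarily commutative) Banach algebra; in particular $\mathcal A\mathcal B\in\mathcal L$ and $\|\mathcal A\mathcal B\|_{\mathcal L}\le\|\mathcal A\|_{\mathcal L}\|\mathcal B\|_{\mathcal L}$ for all $\mathcal A,\mathcal B\in\mathcal L$.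
   Context: Let $N,M,p$ be positive integers and $h=1/p$. Let $I_N$ be the set of all subsets of $\{1,\dots,N\}$; for $\alpha\in I_N$, $|\alpha|$ is its cardinality and $\bar\alpha$ its complement in $\{1,\dots,N\}$. For $\mathbf x=(x_i)$ write $\mathbf x_\alpha=(x_i)_{i\in\alpha}\in[0,1)^{|\alpha|}$, components in increasing order of indices. For disjoint $\alpha,\beta$, $\mathbf y_\beta\diamond\mathbf x_\alpha=\mathbf x_\alpha\diamond\mathbf y_\beta=\mathbf z_{\alpha\cup\beta}$ where $z_i=x_i$ for $i\in\alpha$ and $z_i=y_i$ for $i\in\beta$. Write $\langle f\rangle_\alpha=\int_{[0,1)^{|\alpha|}}f\,d\mathbf x_\alpha$ with $d\mathbf x_\alpha=\prod_{i\in\alpha}dx_i$, and $\langle f\rangle_\emptyset=f$. Let $\chi^h_i$ be the indicator of $[i/p,(i+1)/p)$. A function $A(y_1,\dots,y_R)$ on $[0,1)^R$ is $h$-staircase if it is a finite linear combination of functions $\prod_{j=1}^R\chi^h_{i_j}(y_j)$; a matrix-valued function is $h$-staircase if all its entries are. $\mathcal L^h_{N,M}$ is the set of operators $\mathcal A$ on $L^2([0,1)^N,\mathbb C^M)$ of the form $(\mathcal A\mathbf u)(\mathbf k)=\sum_{\alpha\in I_N}\langle\mathbf A_\alpha(\mathbf k,\mathbf x_\alpha)\mathbf u(\mathbf k_{\bar\alpha}\diamond\mathbf x_\alpha)\rangle_\alpha$, $\mathbf k\in[0,1)^N$, where each $\mathbf A_\alpha=(a_{i,j,\alpha})_{i,j=1}^M$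 is an $h$-staircase $M\times M$ matrix-valued function of $(\mathbf k,\mathbf x_\alpha)\in[0,1)^N\times[0,1)^{|\alpha|}$ (these coefficients are uniquely determined by $\mathcal A$). Define $\|\mathcal A\|_{\mathcal L}=\sum_{\alpha\in I_N}\max_{(\mathbf k,\mathbf x_\alpha),\,i}\sum_{j=1}^M|a_{i,j,\alpha}(\mathbf k,\mathbf x_\alpha)|$. *)

theory Defs
  imports "HOL-Analysis.Analysis"
begin

text \<open>Coordinates of [0,1)^N are indexed by a finite type 'n (CARD('n) = N),
  components of C^M by a finite type 'm (CARD('m) = M).  Points of [0,1)^{|alpha|}
  are extensional functions on alpha (PiE alpha).\<close>

definition chi :: "nat \<Rightarrow> nat \<Rightarrow> real \<Rightarrow> real" where
  "chi p i y = indicator {real i / real p ..< (real i + 1) / real p} y"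

text \<open>h-staircase (h = 1/p) complex function of the variables indexed by I, on [0,1)^I:
  a finite linear combination of products of the indicators chi.\<close>
definition staircase :: "nat \<Rightarrow> 'i set \<Rightarrow> (('i \<Rightarrow> real) \<Rightarrow> complex) \<Rightarrow> bool" where
  "staircase p I f \<longleftrightarrow>
     (\<exists>(C :: ('i \<Rightarrow> nat) set) (c :: ('i \<Rightarrow> nat) \<Rightarrow> complex). finite C \<and>
        (\<forall>z \<in> I \<rightarrow>\<^sub>E {0..<1}. f z = (\<Sum>j\<in>C. c j * complex_of_real (\<Prod>i\<in>I. chi p (j i) (z i)))))"

text \<open>A coefficient family: A alpha k x is the matrix A_alpha(k, x_alpha).  It is required to
  be an h-staircase matrix-valued function of the N + |alpha| variables (k, x_alpha),
  i.e. every entry is h-staircase.\<close>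
type_synonym ('n, 'm) coeffs = "'n set \<Rightarrow> ('n \<Rightarrow> real) \<Rightarrow> ('n \<Rightarrow> real) \<Rightarrow> complex^'m^'m"

definition is_coeffs :: "nat \<Rightarrow> ('n::finite, 'm::finite) coeffs \<Rightarrow> bool" where
  "is_coeffs p A \<longleftrightarrow>
     (\<forall>\<alpha> r s. staircase p (UNIV <+> \<alpha>) (\<lambda>z. A \<alpha> (\<lambda>i. z (Inl i)) (\<lambda>i. z (Inr i)) $ r $ s))"

definition unitI :: "real measure" where
  "unitI = restrict_space lborel {0..<1}"

definition cube :: "'n set \<Rightarrow> ('n \<Rightarrow> real) measure" where
  "cube \<alpha> = PiM \<alpha> (\<lambda>_. unitI)"

definition merge_pt :: "'n set \<Rightarrow> ('n \<Rightarrow> real) \<Rightarrow> ('n \<Rightarrow> real) \<Rightarrow> ('n \<Rightarrow> real)" where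
  "merge_pt \<alpha> k x = (\<lambda>i. if i \<in> \<alpha> then x i else k i)"

definition opL :: "('n::finite, 'm::finite) coeffs \<Rightarrow> (('n \<Rightarrow> real) \<Rightarrow> complex^'m) \<Rightarrow> ('n \<Rightarrow> real) \<Rightarrow> complex^'m" where
  "opL A u k = (\<Sum>\<alpha>\<in>UNIV. \<integral>x. A \<alpha> k x *v u (merge_pt \<alpha> k x) \<partial>cube \<alpha>)"

definition isL2 :: "(('n::finite \<Rightarrow> real) \<Rightarrow> complex^'m::finite) \<Rightarrow> bool" where
  "isL2 u \<longleftrightarrow> u \<in> borel_measurable (cube UNIV) \<and> integrable (cube UNIV) (\<lambda>k. (norm (u k))\<^sup>2)"

definition L2norm :: "(('n::finite \<Rightarrow> real) \<Rightarrow> complex^'m::finite) \<Rightarrow> real" where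
  "L2norm u = sqrt (\<integral>k. (norm (u k))\<^sup>2 \<partial>cube UNIV)"

definition dom_pts :: "'n set \<Rightarrow> (('n \<Rightarrow> real) \<times> ('n \<Rightarrow> real)) set" where
  "dom_pts \<alpha> = (UNIV \<rightarrow>\<^sub>E {0..<1}) \<times> (\<alpha> \<rightarrow>\<^sub>E {0..<1})"

definition normL :: "('n::finite, 'm::finite) coeffs \<Rightarrow> real" where
  "normL A = (\<Sum>\<alpha>\<in>UNIV. Max {(\<Sum>j\<in>UNIV. norm (A \<alpha> k x $ i $ j)) | k x i. (k, x) \<in> dom_pts \<alpha>})"

definition addL :: "('n, 'm::finite) coeffs \<Rightarrow> ('n, 'm) coeffs \<Rightarrow> ('n, 'm) coeffs" where
  "addL A B = (\<lambda>\<alpha> k x. A \<alpha> k x + B \<alpha> k x)"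

definition diffL :: "('n, 'm::finite) coeffs \<Rightarrow> ('n, 'm) coeffs \<Rightarrow> ('n, 'm) coeffs" where
  "diffL A B = (\<lambda>\<alpha> k x. A \<alpha> k x - B \<alpha> k x)"

definition scaleL :: "complex \<Rightarrow> ('n, 'm::finite) coeffs \<Rightarrow> ('n, 'm) coeffs" where
  "scaleL c A = (\<lambda>\<alpha> k x. (\<chi> i j. c * (A \<alpha> k x $ i $ j)))"

end

theory Submission
  imports Defs "HOL-Probability.Probability"
begin

text \<open>A coefficient is \<open>h\<close>-staircase exactly when it is constant on the cells of the grid of mesh
  \<open>h = 1/p\<close>, so it takes finitely many values and \<open>normL\<close> is a finite sum of maxima of matrix row sums.
  The norm axioms and the equivalence of \<open>normL\<close>-convergence with uniform convergence of the coefficients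
  are then elementary, and completeness follows because uniform limits of cellwise constant functions are
  cellwise constant. Each term of \<open>opL A u\<close> is bounded on \<open>L\<^sup>2\<close> by Cauchy-Schwarz, since integrating
  \<open>u (merge_pt \<alpha> k x)\<close> over \<open>x\<close> and then over \<open>k\<close> is one integral over the cube. By Fubini the composition
  \<open>opL A \<circ> opL B\<close> is the operator whose \<open>\<gamma>\<close>-coefficient sums, over \<open>\<alpha> \<union> \<beta> = \<gamma>\<close>, the products
  \<open>A\<^sub>\<alpha> B\<^sub>\<beta>\<close> integrated over the variables in \<open>\<alpha> \<inter> \<beta>\<close>; row sums of products and integrals are
  submultiplicative. Finally, if \<open>opL A\<close> vanishes on \<open>L\<^sup>2\<close>, testing it against indicators of
  \<open>\<epsilon>\<close>-boxes exhibits each column of each coefficient as the lowest coefficient of a polynomial in \<open>\<epsilon>\<close>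
  that vanishes for small \<open>\<epsilon>\<close>.\<close>

section \<open>Matrices and row norms\<close>

lemma norm_matrix_entry_le: "norm (M $ i $ j) \<le> norm (M :: complex^'m::finite^'m)"
  using Finite_Cartesian_Product.norm_nth_le[of "M $ i" j] Finite_Cartesian_Product.norm_nth_le[of M i] by linarith

definition row_norm :: "complex^'m::finite^'m \<Rightarrow> 'm \<Rightarrow> real" where
  "row_norm M i = (\<Sum>j\<in>UNIV. norm (M $ i $ j))"

lemma row_norm_nonneg: "row_norm M i \<ge> 0" unfolding row_norm_def by (simp add: sum_nonneg)

lemma norm_vec_le_sum_norm: "norm (v :: 'a::real_normed_vector^'n::finite) \<le> (\<Sum>i\<in>UNIV. norm (v $ i))"
  unfolding norm_vec_def by (rule L2_set_le_sum) auto

lemma norm_matrix_le_sum_row_norm: "norm (M :: complex^'m::finite^'m) \<le> (\<Sum>i\<in>UNIV. row_norm M i)"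
proof -
  have "norm M \<le> (\<Sum>i\<in>UNIV. norm (M $ i))" by (rule norm_vec_le_sum_norm)
  also have "\<dots> \<le> (\<Sum>i\<in>UNIV. row_norm M i)" unfolding row_norm_def by (intro sum_mono norm_vec_le_sum_norm)
  finally show ?thesis .
qed

lemma norm_matrix_vector_mult_le: "norm ((M :: complex^'m::finite^'m) *v (v :: complex^'m)) \<le> (\<Sum>i\<in>UNIV. row_norm M i) * norm v"
proof -
  have "norm (M *v v) \<le> (\<Sum>i\<in>UNIV. norm ((M *v v) $ i))" by (rule norm_vec_le_sum_norm)
  also have "\<dots> \<le> (\<Sum>i\<in>UNIV. \<Sum>j\<in>UNIV. norm (M $ i $ j) * norm v)"
  proof (intro sum_mono)
    fix i
    have "norm ((M *v v) $ i) = norm (\<Sum>j\<in>UNIV. M $ i $ j * v $ j)" by (simp add: matrix_vector_mult_def)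
    also have "\<dots> \<le> (\<Sum>j\<in>UNIV. norm (M $ i $ j * v $ j))" by (rule norm_sum)
    also have "\<dots> \<le> (\<Sum>j\<in>UNIV. norm (M $ i $ j) * norm v)"
      by (intro sum_mono) (simp add: norm_mult mult_left_mono Finite_Cartesian_Product.norm_nth_le)
    finally show "norm ((M *v v) $ i) \<le> (\<Sum>j\<in>UNIV. norm (M $ i $ j) * norm v)" .
  qed
  also have "\<dots> = (\<Sum>i\<in>UNIV. row_norm M i) * norm v" by (simp add: row_norm_def sum_distrib_right)
  finally show ?thesis .
qed

lemma row_norm_matrix_mult_le:
  assumes "\<And>l. row_norm N l \<le> c"
  shows "row_norm (M ** N) i \<le> row_norm M i * c"
proof -
  have "row_norm (M ** N) i = (\<Sum>j\<in>UNIV. norm (\<Sum>l\<in>UNIV. M $ i $ l * N $ l $ j))"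
    unfolding row_norm_def by (simp add: matrix_matrix_mult_def)
  also have "\<dots> \<le> (\<Sum>j\<in>UNIV. \<Sum>l\<in>UNIV. norm (M $ i $ l) * norm (N $ l $ j))"
    by (intro sum_mono order_trans[OF norm_sum]) (simp add: norm_mult)
  also have "\<dots> = (\<Sum>l\<in>UNIV. norm (M $ i $ l) * row_norm N l)"
    unfolding row_norm_def by (subst sum.swap) (simp add: sum_distrib_left)
  also have "\<dots> \<le> (\<Sum>l\<in>UNIV. norm (M $ i $ l) * c)"
    by (intro sum_mono mult_left_mono assms) simp
  also have "\<dots> = row_norm M i * c" unfolding row_norm_def by (simp add: sum_distrib_right)
  finally show ?thesis .
qed

lemma bounded_linear_matrix_vector_mult_left: "bounded_linear (\<lambda>M. (M :: complex^'m::finite^'m) *v v)"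
proof (rule bounded_linear_intro)
  show "(x + y) *v v = x *v v + y *v v" for x y by (simp add: vec_eq_iff matrix_vector_mult_def sum.distrib algebra_simps)
  show "(r *\<^sub>R x) *v v = r *\<^sub>R (x *v v)" for r x
    by (simp add: vec_eq_iff matrix_vector_mult_def scaleR_sum_right)
  show "norm (x *v v) \<le> norm x * (real CARD('m) * real CARD('m) * norm v)" for x :: "complex^'m^'m"
  proof -
    have "norm (x *v v) \<le> (\<Sum>i\<in>UNIV. row_norm x i) * norm v" by (rule norm_matrix_vector_mult_le)
    also have "\<dots> \<le> (\<Sum>i\<in>(UNIV::'m set). \<Sum>j\<in>(UNIV::'m set). norm x) * norm v"
      unfolding row_norm_def by (intro mult_right_mono sum_mono norm_matrix_entry_le) auto
    finally show ?thesis by (simp add: algebra_simps)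
  qed
qed

lemma continuous_on_matrix_vector_mult: "continuous_on UNIV (\<lambda>x. fst x *v (snd x :: complex^'m::finite) :: complex^'m)"
  unfolding matrix_vector_mult_def by (intro continuous_intros)

lemma continuous_on_matrix_matrix_mult: "continuous_on UNIV (\<lambda>x. fst x ** (snd x :: complex^'m::finite^'m) :: complex^'m^'m)"
  unfolding matrix_matrix_mult_def by (intro continuous_intros)

lemma matrix_vector_mult_sum_left: "(\<Sum>i\<in>I. f i) *v (v :: complex^'m::finite) = (\<Sum>i\<in>I. (f i :: complex^'m^'m) *v v)"
  by (rule linear_sum[OF bounded_linear.linear[OF bounded_linear_matrix_vector_mult_left]])

lemma matrix_vector_mult_sum_right: "(M :: complex^'m::finite^'m) *v (\<Sum>i\<in>I. f i) = (\<Sum>i\<in>I. M *v f i)"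
  by (rule linear_sum[OF bounded_linear.linear[OF matrix_vector_mul_bounded_linear]])

lemma matrix_vector_mult_axis_nth: "((M :: complex^'m::finite^'m) *v axis s 1) $ i = M $ i $ s"
proof -
  have "(M *v axis s 1) $ i = (\<Sum>j\<in>UNIV. M $ i $ j * axis s 1 $ j)" by (simp add: matrix_vector_mult_def)
  also have "\<dots> = (\<Sum>j\<in>UNIV. if j = s then M $ i $ j else 0)" by (rule sum.cong) (auto simp: axis_def)
  also have "\<dots> = M $ i $ s" by simp
  finally show ?thesis .
qed

lemma norm_axis_one: "norm (axis s (1::complex) :: complex^'m::finite) = 1"
proof -
  have "(\<Sum>i\<in>UNIV. (norm ((axis s (1::complex) :: complex^'m) $ i))\<^sup>2) = (\<Sum>i\<in>UNIV. if i = s then 1 else (0::real))"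
    by (rule sum.cong) (auto simp: axis_def)
  then show ?thesis unfolding norm_vec_def L2_set_def by simp
qed

lemma square_sum_le_card_sum_squares: "(\<Sum>i\<in>I. a i)\<^sup>2 \<le> real (card I) * (\<Sum>i\<in>I. (a i)\<^sup>2)"
proof -
  have "(\<Sum>i\<in>I. a i * 1)\<^sup>2 \<le> (\<Sum>i\<in>I. (a i)\<^sup>2) * (\<Sum>i\<in>I. 1\<^sup>2)" by (rule Cauchy_Schwarz_ineq_sum)
  then show ?thesis by (simp add: mult.commute)
qed

lemma sum_squares_le_square_sum: "(\<And>i. i \<in> I \<Longrightarrow> (a i :: real) \<ge> 0) \<Longrightarrow> (\<Sum>i\<in>I. (a i)\<^sup>2) \<le> (\<Sum>i\<in>I. a i)\<^sup>2"
proof (induction I rule: infinite_finite_induct)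
  case (insert x F)
  have s0: "sum a F \<ge> 0" using insert by (simp add: sum_nonneg)
  have "(\<Sum>i\<in>insert x F. (a i)\<^sup>2) = (a x)\<^sup>2 + (\<Sum>i\<in>F. (a i)\<^sup>2)" using insert by simp
  also have "\<dots> \<le> (a x)\<^sup>2 + (sum a F)\<^sup>2" using insert by simp
  also have "\<dots> \<le> (a x + sum a F)\<^sup>2" using s0 insert.prems[of x] by (simp add: power2_sum)
  finally show ?case using insert by simp
qed auto

section \<open>Staircase functions\<close>

definition cell_index :: "nat \<Rightarrow> real \<Rightarrow> nat" where
  "cell_index p y = nat \<lfloor>real p * y\<rfloor>"

lemma cell_index_less: "p > 0 \<Longrightarrow> 0 \<le> y \<Longrightarrow> y < 1 \<Longrightarrow> cell_index p y < p"
proof -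
  assume a: "p > 0" "0 \<le> y" "y < 1"
  have "real p * y < real p" using a by simp
  then have "\<lfloor>real p * y\<rfloor> < int p" by (simp add: floor_less_iff)
  then show ?thesis unfolding cell_index_def using a by (simp add: nat_less_iff)
qed

lemma chi_eq_cell_index:
  assumes "p > 0" "0 \<le> y"
  shows "chi p i y = (if i = cell_index p y then 1 else 0)"
proof -
  have pp: "real p > 0" using assms by simp
  have "y \<in> {real i / real p ..< (real i + 1) / real p} \<longleftrightarrow> real i \<le> real p * y \<and> real p * y < real i + 1"
    using pp by (auto simp: field_simps)
  also have "\<dots> \<longleftrightarrow> \<lfloor>real p * y\<rfloor> = int i"
    by (simp add: floor_eq_iff)
  also have "\<dots> \<longleftrightarrow> i = cell_index p y"
    using assms unfolding cell_index_def by auto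
  finally show ?thesis unfolding chi_def by (simp add: indicator_def)
qed

definition cell_start :: "nat \<Rightarrow> nat \<Rightarrow> real" where
  "cell_start p n = real n / real p"

lemma cell_start_in_unit: "n < p \<Longrightarrow> cell_start p n \<in> {0..<1}"
  by (auto simp: cell_start_def)

lemma cell_index_cell_start: "p > 0 \<Longrightarrow> cell_index p (cell_start p n) = n"
  by (simp add: cell_index_def cell_start_def)



lemma cell_end_le_1: "p > 0 \<Longrightarrow> n < p \<Longrightarrow> (real n + 1) / real p \<le> 1"
  by (simp add: field_simps)

lemma cell_index_eqI:
  assumes p: "p > 0" and "real n / real p \<le> y" and "y < (real n + 1) / real p"
  shows "cell_index p y = n"
proof -
  have "0 \<le> y" using assms(2) by (meson divide_nonneg_nonneg of_nat_0_le_iff order_trans)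
  then show ?thesis using chi_eq_cell_index[OF p, of y n] assms unfolding chi_def by (auto simp: indicator_def split: if_splits)
qed

lemma prod_chi_eq:
  assumes p: "p > 0" and fin: "finite I" and z: "z \<in> I \<rightarrow>\<^sub>E {0..<1}"
  shows "(\<Prod>i\<in>I. chi p (j i) (z i)) = (if \<forall>i\<in>I. j i = cell_index p (z i) then 1 else 0)"
proof -
  have "(\<Prod>i\<in>I. chi p (j i) (z i)) = (\<Prod>i\<in>I. (if j i = cell_index p (z i) then 1 else 0))"
    using z p by (intro prod.cong) (auto simp: chi_eq_cell_index PiE_def Pi_def)
  also have "\<dots> = (if \<forall>i\<in>I. j i = cell_index p (z i) then 1 else 0)"
    using fin by (induction I rule: finite_induct) auto
  finally show ?thesis .
qed

lemma staircase_iff_cellwise_const: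
  assumes p: "p > 0" and fin: "finite I"
  shows "staircase p I f \<longleftrightarrow>
    (\<forall>z\<in>I \<rightarrow>\<^sub>E {0..<1}. \<forall>z'\<in>I \<rightarrow>\<^sub>E {0..<1}. (\<forall>i\<in>I. cell_index p (z i) = cell_index p (z' i)) \<longrightarrow> f z = f z')"
proof
  assume "staircase p I f"
  then obtain C c where "\<forall>z \<in> I \<rightarrow>\<^sub>E {0..<1}. f z = (\<Sum>j\<in>C. c j * complex_of_real (\<Prod>i\<in>I. chi p (j i) (z i)))"
    unfolding staircase_def by blast
  then show "\<forall>z\<in>I \<rightarrow>\<^sub>E {0..<1}. \<forall>z'\<in>I \<rightarrow>\<^sub>E {0..<1}. (\<forall>i\<in>I. cell_index p (z i) = cell_index p (z' i)) \<longrightarrow> f z = f z'"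
    using prod_chi_eq[OF p fin] by simp
next
  assume H: "\<forall>z\<in>I \<rightarrow>\<^sub>E {0..<1}. \<forall>z'\<in>I \<rightarrow>\<^sub>E {0..<1}. (\<forall>i\<in>I. cell_index p (z i) = cell_index p (z' i)) \<longrightarrow> f z = f z'"
  define C where "C = I \<rightarrow>\<^sub>E {..<p}"
  define c where "c j = f (\<lambda>i\<in>I. cell_start p (j i))" for j :: "_ \<Rightarrow> nat"
  have "finite C" unfolding C_def using fin by (simp add: finite_PiE)
  moreover have "f z = (\<Sum>j\<in>C. c j * complex_of_real (\<Prod>i\<in>I. chi p (j i) (z i)))"
    if z: "z \<in> I \<rightarrow>\<^sub>E {0..<1}" for z
  proof -
    define j0 where "j0 = (\<lambda>i\<in>I. cell_index p (z i))"
    have j0C: "j0 \<in> C" unfolding C_def j0_def using z p cell_index_less by (auto simp: PiE_def Pi_def)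
    have "(\<forall>i\<in>I. j i = cell_index p (z i)) \<longleftrightarrow> j = j0" if "j \<in> C" for j
      using that unfolding C_def j0_def by (auto simp: PiE_def extensional_def)
    then have "(\<Sum>j\<in>C. c j * complex_of_real (\<Prod>i\<in>I. chi p (j i) (z i))) = (\<Sum>j\<in>C. if j = j0 then c j else 0)"
      using prod_chi_eq[OF p fin z] by (intro sum.cong) auto
    also have "\<dots> = c j0" using j0C \<open>finite C\<close> by simp
    also have "\<dots> = f z" unfolding c_def
    proof -
      have "(\<lambda>i\<in>I. cell_start p (j0 i)) \<in> I \<rightarrow>\<^sub>E {0..<1}"
        using j0C cell_start_in_unit unfolding C_def by (auto simp: PiE_def Pi_def)
      moreover have "\<forall>i\<in>I. cell_index p ((\<lambda>i\<in>I. cell_start p (j0 i)) i) = cell_index p (z i)"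
        using p by (simp add: cell_index_cell_start j0_def)
      ultimately show "f (\<lambda>i\<in>I. cell_start p (j0 i)) = f z" using H z by blast
    qed
    finally show ?thesis by simp
  qed
  ultimately show "staircase p I f" unfolding staircase_def by blast
qed

definition same_cell :: "nat \<Rightarrow> 'n set \<Rightarrow> ('n \<Rightarrow> real) \<Rightarrow> ('n \<Rightarrow> real) \<Rightarrow> ('n \<Rightarrow> real) \<Rightarrow> ('n \<Rightarrow> real) \<Rightarrow> bool" where
  "same_cell p \<alpha> k x k' x' \<longleftrightarrow> (\<forall>i. cell_index p (k i) = cell_index p (k' i)) \<and> (\<forall>i\<in>\<alpha>. cell_index p (x i) = cell_index p (x' i))"

definition cellwise_const :: "nat \<Rightarrow> 'n set \<Rightarrow> (('n \<Rightarrow> real) \<Rightarrow> ('n \<Rightarrow> real) \<Rightarrow> 'b) \<Rightarrow> bool" where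
  "cellwise_const p \<alpha> g \<longleftrightarrow> (\<forall>k x k' x'. (k, x) \<in> dom_pts \<alpha> \<longrightarrow> (k', x') \<in> dom_pts \<alpha> \<longrightarrow> same_cell p \<alpha> k x k' x' \<longrightarrow> g k x = g k' x')"

lemma split_in_dom_pts:
  assumes "z \<in> (UNIV <+> \<alpha>) \<rightarrow>\<^sub>E {0..<1}"
  shows "((\<lambda>i. z (Inl i)), (\<lambda>i. z (Inr i))) \<in> dom_pts \<alpha>"
  using assms unfolding dom_pts_def by (auto simp: PiE_def Pi_def extensional_def)

lemma case_sum_in_dom_pts:
  assumes "(k, x) \<in> dom_pts \<alpha>"
  shows "case_sum k x \<in> (UNIV <+> \<alpha>) \<rightarrow>\<^sub>E {0..<1}"
  using assms unfolding dom_pts_def by (auto simp: PiE_def Pi_def extensional_def split: sum.splits)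

lemma is_coeffs_iff_cellwise_const:
  fixes A :: "('n::finite, 'm::finite) coeffs"
  assumes p: "p > 0"
  shows "is_coeffs p A \<longleftrightarrow> (\<forall>\<alpha>. cellwise_const p \<alpha> (A \<alpha>))"
proof -
  have fin: "finite ((UNIV::'n set) <+> \<alpha>)" for \<alpha> :: "'n set" by simp
  have "staircase p (UNIV <+> \<alpha>) (\<lambda>z. A \<alpha> (\<lambda>i. z (Inl i)) (\<lambda>i. z (Inr i)) $ r $ s) \<longleftrightarrow>
    (\<forall>k x k' x'. (k, x) \<in> dom_pts \<alpha> \<longrightarrow> (k', x') \<in> dom_pts \<alpha> \<longrightarrow> same_cell p \<alpha> k x k' x' \<longrightarrow> A \<alpha> k x $ r $ s = A \<alpha> k' x' $ r $ s)"
    for \<alpha> r s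
  proof -
    have c: "(\<forall>i\<in>UNIV <+> \<alpha>. cell_index p (z i) = cell_index p (z' i)) \<longleftrightarrow> same_cell p \<alpha> (\<lambda>i. z (Inl i)) (\<lambda>i. z (Inr i)) (\<lambda>i. z' (Inl i)) (\<lambda>i. z' (Inr i))" for z z'
      unfolding same_cell_def by auto
    show ?thesis
      unfolding staircase_iff_cellwise_const[OF p fin]
    proof (intro iffI allI impI)
      fix k x k' x'
      assume H: "\<forall>z\<in>(UNIV <+> \<alpha>) \<rightarrow>\<^sub>E {0..<1}. \<forall>z'\<in>(UNIV <+> \<alpha>) \<rightarrow>\<^sub>E {0..<1}. (\<forall>i\<in>UNIV <+> \<alpha>. cell_index p (z i) = cell_index p (z' i)) \<longrightarrow>
         A \<alpha> (\<lambda>i. z (Inl i)) (\<lambda>i. z (Inr i)) $ r $ s = A \<alpha> (\<lambda>i. z' (Inl i)) (\<lambda>i. z' (Inr i)) $ r $ s"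
        and a: "(k, x) \<in> dom_pts \<alpha>" "(k', x') \<in> dom_pts \<alpha>" "same_cell p \<alpha> k x k' x'"
      have "A \<alpha> (\<lambda>i. case_sum k x (Inl i)) (\<lambda>i. case_sum k x (Inr i)) $ r $ s =
            A \<alpha> (\<lambda>i. case_sum k' x' (Inl i)) (\<lambda>i. case_sum k' x' (Inr i)) $ r $ s"
      proof -
        have e1: "(\<lambda>i. case_sum k x (Inl i)) = k" "(\<lambda>i. case_sum k x (Inr i)) = x"
             "(\<lambda>i. case_sum k' x' (Inl i)) = k'" "(\<lambda>i. case_sum k' x' (Inr i)) = x'" by auto
        have "\<forall>i\<in>UNIV <+> \<alpha>. cell_index p (case_sum k x i) = cell_index p (case_sum k' x' i)"
          using c[of "case_sum k x" "case_sum k' x'"] a(3) unfolding e1 by blast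
        then show ?thesis using H case_sum_in_dom_pts[OF a(1)] case_sum_in_dom_pts[OF a(2)] by blast
      qed
      then show "A \<alpha> k x $ r $ s = A \<alpha> k' x' $ r $ s" by (simp add: eta_contract_eq)
    next
      assume H: "\<forall>k x k' x'. (k, x) \<in> dom_pts \<alpha> \<longrightarrow> (k', x') \<in> dom_pts \<alpha> \<longrightarrow> same_cell p \<alpha> k x k' x' \<longrightarrow> A \<alpha> k x $ r $ s = A \<alpha> k' x' $ r $ s"
      show "\<forall>z\<in>(UNIV <+> \<alpha>) \<rightarrow>\<^sub>E {0..<1}. \<forall>z'\<in>(UNIV <+> \<alpha>) \<rightarrow>\<^sub>E {0..<1}. (\<forall>i\<in>UNIV <+> \<alpha>. cell_index p (z i) = cell_index p (z' i)) \<longrightarrow>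
         A \<alpha> (\<lambda>i. z (Inl i)) (\<lambda>i. z (Inr i)) $ r $ s = A \<alpha> (\<lambda>i. z' (Inl i)) (\<lambda>i. z' (Inr i)) $ r $ s"
        using H split_in_dom_pts c by blast
    qed
  qed
  then show ?thesis
    unfolding is_coeffs_def cellwise_const_def by (auto simp: vec_eq_iff)
qed

lemma zero_in_dom_pts: "((\<lambda>_. 0), (\<lambda>i\<in>\<alpha>. 0)) \<in> dom_pts \<alpha>"
  unfolding dom_pts_def by auto

lemma finite_range_cellwise_const:
  fixes g :: "('n::finite \<Rightarrow> real) \<Rightarrow> ('n \<Rightarrow> real) \<Rightarrow> 'b"
  assumes p: "p > 0" and g: "cellwise_const p \<alpha> g"
  shows "finite {g k x | k x. (k, x) \<in> dom_pts \<alpha>}"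
proof -
  let ?F = "\<lambda>(K, L). g (\<lambda>i. cell_start p (K i)) (\<lambda>i\<in>\<alpha>. cell_start p (L i))"
  have "{g k x | k x. (k, x) \<in> dom_pts \<alpha>} \<subseteq> ?F ` ((UNIV \<rightarrow>\<^sub>E {..<p}) \<times> (\<alpha> \<rightarrow>\<^sub>E {..<p}))"
  proof safe
    fix k x assume kx: "(k, x) \<in> dom_pts \<alpha>"
    define K where "K = (\<lambda>i. cell_index p (k i))"
    define L where "L = (\<lambda>i\<in>\<alpha>. cell_index p (x i))"
    have K: "K \<in> UNIV \<rightarrow>\<^sub>E {..<p}" using kx p cell_index_less unfolding K_def dom_pts_def by (auto simp: PiE_def Pi_def)
    have L: "L \<in> \<alpha> \<rightarrow>\<^sub>E {..<p}" using kx p cell_index_less unfolding L_def dom_pts_def by (auto simp: PiE_def Pi_def)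
    have d2: "((\<lambda>i. cell_start p (K i)), (\<lambda>i\<in>\<alpha>. cell_start p (L i))) \<in> dom_pts \<alpha>"
      using K L cell_start_in_unit unfolding dom_pts_def by (auto simp: PiE_def Pi_def)
    have sc: "same_cell p \<alpha> k x (\<lambda>i. cell_start p (K i)) (\<lambda>i\<in>\<alpha>. cell_start p (L i))"
      unfolding same_cell_def K_def L_def using p by (simp add: cell_index_cell_start)
    have "g k x = ?F (K, L)" using g kx d2 sc unfolding cellwise_const_def by auto
    then show "g k x \<in> ?F ` ((UNIV \<rightarrow>\<^sub>E {..<p}) \<times> (\<alpha> \<rightarrow>\<^sub>E {..<p}))" using K L by blast
  qed
  moreover have "finite (((UNIV::'n set) \<rightarrow>\<^sub>E {..<p}) \<times> (\<alpha> \<rightarrow>\<^sub>E {..<p}))"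
    by (intro finite_cartesian_product finite_PiE) auto
  ultimately show ?thesis by (meson finite_imageI finite_subset)
qed

lemma cellwise_const_add: "cellwise_const p \<alpha> f \<Longrightarrow> cellwise_const p \<alpha> g \<Longrightarrow> cellwise_const p \<alpha> (\<lambda>k x. f k x + g k x)"
  unfolding cellwise_const_def by metis

lemma cellwise_const_diff: "cellwise_const p \<alpha> f \<Longrightarrow> cellwise_const p \<alpha> g \<Longrightarrow> cellwise_const p \<alpha> (\<lambda>k x. f k x - g k x)"
  unfolding cellwise_const_def by metis

lemma cellwise_const_scale: "cellwise_const p \<alpha> f \<Longrightarrow> cellwise_const p \<alpha> (\<lambda>k x. (\<chi> i j. c * (f k x $ i $ j)))"
  unfolding cellwise_const_def by metis

lemma cellwise_const_diffL: "\<forall>\<alpha>. cellwise_const p \<alpha> (A \<alpha>) \<Longrightarrow> \<forall>\<alpha>. cellwise_const p \<alpha> (B \<alpha>) \<Longrightarrow> \<forall>\<alpha>. cellwise_const p \<alpha> (diffL A B \<alpha>)"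
  unfolding diffL_def using cellwise_const_diff by blast

section \<open>The norm on coefficient families\<close>

definition row_norms :: "('n, 'm::finite) coeffs \<Rightarrow> 'n set \<Rightarrow> real set" where
  "row_norms A \<alpha> = {row_norm (A \<alpha> k x) i | k x i. (k, x) \<in> dom_pts \<alpha>}"

definition coeff_norm :: "('n, 'm::finite) coeffs \<Rightarrow> 'n set \<Rightarrow> real" where
  "coeff_norm A \<alpha> = Max (row_norms A \<alpha>)"

definition coeff_bound :: "('n, 'm::finite) coeffs \<Rightarrow> 'n set \<Rightarrow> real" where
  "coeff_bound A \<alpha> = real CARD('m) * coeff_norm A \<alpha>"

lemma normL_eq_sum_coeff_norm: "normL A = (\<Sum>\<alpha>\<in>UNIV. coeff_norm A \<alpha>)"
  unfolding normL_def coeff_norm_def row_norms_def row_norm_def ..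

lemma finite_row_norms:
  fixes A :: "('n::finite, 'm::finite) coeffs"
  assumes p: "p > 0" and A: "\<forall>\<alpha>. cellwise_const p \<alpha> (A \<alpha>)"
  shows "finite (row_norms A \<alpha>)"
proof -
  have "row_norms A \<alpha> = (\<lambda>(M, i). row_norm M i) ` ({A \<alpha> k x | k x. (k, x) \<in> dom_pts \<alpha>} \<times> UNIV)"
    unfolding row_norms_def by force
  then show ?thesis using finite_range_cellwise_const[OF p A[rule_format]] by (simp del: Collect_ex_eq)
qed

lemma row_norms_nonempty: "row_norms A \<alpha> \<noteq> {}"
  unfolding row_norms_def using zero_in_dom_pts by blast

lemma row_norm_le_coeff_norm:
  fixes A :: "('n::finite, 'm::finite) coeffs"
  assumes p: "p > 0" and A: "\<forall>\<alpha>. cellwise_const p \<alpha> (A \<alpha>)" and kx: "(k, x) \<in> dom_pts \<alpha>"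
  shows "row_norm (A \<alpha> k x) i \<le> coeff_norm A \<alpha>"
  unfolding coeff_norm_def using finite_row_norms[OF p A] kx by (intro Max_ge) (auto simp: row_norms_def)

lemma coeff_norm_le:
  fixes A :: "('n::finite, 'm::finite) coeffs"
  assumes p: "p > 0" and A: "\<forall>\<alpha>. cellwise_const p \<alpha> (A \<alpha>)"
    and H: "\<And>k x i. (k, x) \<in> dom_pts \<alpha> \<Longrightarrow> row_norm (A \<alpha> k x) i \<le> c"
  shows "coeff_norm A \<alpha> \<le> c"
  unfolding coeff_norm_def using finite_row_norms[OF p A] row_norms_nonempty H by (subst Max_le_iff) (auto simp: row_norms_def)

lemma coeff_norm_attained:
  fixes A :: "('n::finite, 'm::finite) coeffs"
  assumes p: "p > 0" and A: "\<forall>\<alpha>. cellwise_const p \<alpha> (A \<alpha>)"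
  obtains k x i where "(k, x) \<in> dom_pts \<alpha>" "coeff_norm A \<alpha> = row_norm (A \<alpha> k x) i"
proof -
  have "coeff_norm A \<alpha> \<in> row_norms A \<alpha>" unfolding coeff_norm_def using finite_row_norms[OF p A] row_norms_nonempty by (rule Max_in)
  then show ?thesis using that unfolding row_norms_def by blast
qed

lemma coeff_norm_nonneg:
  fixes A :: "('n::finite, 'm::finite) coeffs"
  assumes p: "p > 0" and A: "\<forall>\<alpha>. cellwise_const p \<alpha> (A \<alpha>)"
  shows "coeff_norm A \<alpha> \<ge> 0"
  using row_norm_le_coeff_norm[OF p A zero_in_dom_pts] row_norm_nonneg by (meson order_trans)

lemma coeff_bound_nonneg:
  fixes A :: "('n::finite, 'm::finite) coeffs"
  assumes p: "p > 0" and A: "\<forall>\<alpha>. cellwise_const p \<alpha> (A \<alpha>)"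
  shows "coeff_bound A \<alpha> \<ge> 0"
  unfolding coeff_bound_def using coeff_norm_nonneg[OF p A] by simp

lemma normL_nonneg:
  fixes A :: "('n::finite, 'm::finite) coeffs"
  assumes p: "p > 0" and A: "\<forall>\<alpha>. cellwise_const p \<alpha> (A \<alpha>)"
  shows "normL A \<ge> 0"
  unfolding normL_eq_sum_coeff_norm using coeff_norm_nonneg[OF p A] by (meson sum_nonneg)

lemma coeff_norm_le_normL:
  fixes A :: "('n::finite, 'm::finite) coeffs"
  assumes p: "p > 0" and A: "\<forall>\<alpha>. cellwise_const p \<alpha> (A \<alpha>)"
  shows "coeff_norm A \<alpha> \<le> normL A"
  unfolding normL_eq_sum_coeff_norm using member_le_sum[of \<alpha> UNIV "coeff_norm A"] coeff_norm_nonneg[OF p A] by auto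

lemma norm_coeff_le_coeff_bound:
  fixes A :: "('n::finite, 'm::finite) coeffs"
  assumes p: "p > 0" and A: "\<forall>\<alpha>. cellwise_const p \<alpha> (A \<alpha>)" and kx: "(k, x) \<in> dom_pts \<alpha>"
  shows "norm (A \<alpha> k x) \<le> coeff_bound A \<alpha>"
proof -
  have "norm (A \<alpha> k x) \<le> (\<Sum>i\<in>UNIV. row_norm (A \<alpha> k x) i)" by (rule norm_matrix_le_sum_row_norm)
  also have "\<dots> \<le> (\<Sum>i\<in>(UNIV::'m set). coeff_norm A \<alpha>)" by (intro sum_mono row_norm_le_coeff_norm[OF p A kx])
  finally show ?thesis by (simp add: coeff_bound_def)
qed

lemma norm_coeff_mult_le:
  fixes A :: "('n::finite, 'm::finite) coeffs"
  assumes p: "p > 0" and A: "\<forall>\<alpha>. cellwise_const p \<alpha> (A \<alpha>)" and kx: "(k, x) \<in> dom_pts \<alpha>"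
  shows "norm (A \<alpha> k x *v v) \<le> coeff_bound A \<alpha> * norm v"
proof -
  have "norm (A \<alpha> k x *v v) \<le> (\<Sum>i\<in>UNIV. row_norm (A \<alpha> k x) i) * norm v" by (rule norm_matrix_vector_mult_le)
  also have "\<dots> \<le> (\<Sum>i\<in>(UNIV::'m set). coeff_norm A \<alpha>) * norm v" by (intro mult_right_mono sum_mono row_norm_le_coeff_norm[OF p A kx]) auto
  finally show ?thesis by (simp add: coeff_bound_def)
qed

lemma coeff_norm_le_of_norm_bound:
  fixes A :: "('n::finite, 'm::finite) coeffs"
  assumes p: "p > 0" and A: "\<forall>\<alpha>. cellwise_const p \<alpha> (A \<alpha>)"
    and H: "\<And>k x. (k, x) \<in> dom_pts \<alpha> \<Longrightarrow> norm (A \<alpha> k x) \<le> c"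
  shows "coeff_norm A \<alpha> \<le> real CARD('m) * c"
proof (rule coeff_norm_le[OF p A])
  fix k x i assume kx: "(k, x) \<in> dom_pts \<alpha>"
  have "row_norm (A \<alpha> k x) i \<le> (\<Sum>j\<in>(UNIV::'m set). c)" unfolding row_norm_def
    by (intro sum_mono order_trans[OF norm_matrix_entry_le H[OF kx]])
  then show "row_norm (A \<alpha> k x) i \<le> real CARD('m) * c" by simp
qed

lemma addL_normL_le:
  fixes A B :: "('n::finite, 'm::finite) coeffs"
  assumes p: "p > 0" and A: "is_coeffs p A" and B: "is_coeffs p B"
  shows "is_coeffs p (addL A B) \<and> normL (addL A B) \<le> normL A + normL B"
proof -
  have cA: "\<forall>\<alpha>. cellwise_const p \<alpha> (A \<alpha>)" and cB: "\<forall>\<alpha>. cellwise_const p \<alpha> (B \<alpha>)" using A B is_coeffs_iff_cellwise_const[OF p] by auto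
  have cAB: "\<forall>\<alpha>. cellwise_const p \<alpha> (addL A B \<alpha>)" using cA cB cellwise_const_add unfolding addL_def by blast
  have "coeff_norm (addL A B) \<alpha> \<le> coeff_norm A \<alpha> + coeff_norm B \<alpha>" for \<alpha>
  proof (rule coeff_norm_le[OF p cAB])
    fix k x i assume kx: "(k, x) \<in> dom_pts \<alpha>"
    have "row_norm ((addL A B) \<alpha> k x) i \<le> row_norm (A \<alpha> k x) i + row_norm (B \<alpha> k x) i"
      unfolding row_norm_def addL_def sum.distrib[symmetric] by (intro sum_mono) (simp add: norm_triangle_ineq)
    also have "\<dots> \<le> coeff_norm A \<alpha> + coeff_norm B \<alpha>" using row_norm_le_coeff_norm[OF p cA kx] row_norm_le_coeff_norm[OF p cB kx] by (meson add_mono)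
    finally show "row_norm ((addL A B) \<alpha> k x) i \<le> coeff_norm A \<alpha> + coeff_norm B \<alpha>" .
  qed
  then have "normL (addL A B) \<le> normL A + normL B"
    unfolding normL_eq_sum_coeff_norm sum.distrib[symmetric] by (intro sum_mono) auto
  then show ?thesis using cAB is_coeffs_iff_cellwise_const[OF p] by blast
qed

lemma scaleL_normL_eq:
  fixes A :: "('n::finite, 'm::finite) coeffs"
  assumes p: "p > 0" and A: "is_coeffs p A"
  shows "is_coeffs p (scaleL c A) \<and> normL (scaleL c A) = norm c * normL A"
proof -
  have cA: "\<forall>\<alpha>. cellwise_const p \<alpha> (A \<alpha>)" using A is_coeffs_iff_cellwise_const[OF p] by auto
  have cS: "\<forall>\<alpha>. cellwise_const p \<alpha> (scaleL c A \<alpha>)" using cA cellwise_const_scale unfolding scaleL_def by blast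
  have row_norm: "row_norm ((scaleL c A) \<alpha> k x) i = norm c * row_norm (A \<alpha> k x) i" for \<alpha> k x i
    unfolding row_norm_def scaleL_def by (simp add: norm_mult sum_distrib_left)
  have "coeff_norm (scaleL c A) \<alpha> = norm c * coeff_norm A \<alpha>" for \<alpha>
  proof (rule antisym)
    show "coeff_norm (scaleL c A) \<alpha> \<le> norm c * coeff_norm A \<alpha>"
      using row_norm_le_coeff_norm[OF p cA] by (intro coeff_norm_le[OF p cS]) (auto simp: row_norm intro!: mult_left_mono)
    obtain k x i where kx: "(k, x) \<in> dom_pts \<alpha>" "coeff_norm A \<alpha> = row_norm (A \<alpha> k x) i"
      using coeff_norm_attained[OF p cA] by blast
    show "norm c * coeff_norm A \<alpha> \<le> coeff_norm (scaleL c A) \<alpha>"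
      using row_norm_le_coeff_norm[OF p cS kx(1), of i] kx(2) row_norm by simp
  qed
  then have "normL (scaleL c A) = norm c * normL A"
    unfolding normL_eq_sum_coeff_norm sum_distrib_left by simp
  then show ?thesis using cS is_coeffs_iff_cellwise_const[OF p] by blast
qed

lemma dist_coeffs_le_normL_diffL:
  fixes A B :: "('n::finite, 'm::finite) coeffs"
  assumes p: "p > 0" and A: "\<forall>\<alpha>. cellwise_const p \<alpha> (A \<alpha>)" and B: "\<forall>\<alpha>. cellwise_const p \<alpha> (B \<alpha>)"
    and kx: "(k, x) \<in> dom_pts \<alpha>"
  shows "dist (A \<alpha> k x) (B \<alpha> k x) \<le> real CARD('m) * normL (diffL A B)"
proof -
  have D: "\<forall>\<alpha>. cellwise_const p \<alpha> (diffL A B \<alpha>)" by (rule cellwise_const_diffL[OF A B])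
  have "dist (A \<alpha> k x) (B \<alpha> k x) = norm (diffL A B \<alpha> k x)"
    by (simp add: dist_norm diffL_def)
  also have "\<dots> \<le> coeff_bound (diffL A B) \<alpha>" by (rule norm_coeff_le_coeff_bound[OF p D kx])
  also have "\<dots> \<le> real CARD('m) * normL (diffL A B)"
    unfolding coeff_bound_def by (intro mult_left_mono coeff_norm_le_normL[OF p D]) auto
  finally show ?thesis .
qed

lemma uniform_limit_if_normL_tendsto:
  fixes S :: "nat \<Rightarrow> ('n::finite, 'm::finite) coeffs" and A :: "('n, 'm) coeffs"
  assumes p: "p > 0" and S: "\<forall>n. \<forall>\<alpha>. cellwise_const p \<alpha> (S n \<alpha>)" and A: "\<forall>\<alpha>. cellwise_const p \<alpha> (A \<alpha>)"
    and L: "(\<lambda>n. normL (diffL (S n) A)) \<longlonglongrightarrow> 0"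
  shows "uniform_limit (dom_pts \<alpha>) (\<lambda>n (k, x). S n \<alpha> k x) (\<lambda>(k, x). A \<alpha> k x) sequentially"
  unfolding uniform_limit_iff
proof (intro allI impI)
  fix e :: real assume e: "e > 0"
  let ?C = "real CARD('m)"
  have C: "?C > 0" by simp
  have "eventually (\<lambda>n. normL (diffL (S n) A) < e / ?C) sequentially"
    using order_tendstoD(2)[OF L] e C by simp
  then show "eventually (\<lambda>n. \<forall>kx\<in>dom_pts \<alpha>. dist ((\<lambda>(k, x). S n \<alpha> k x) kx) ((\<lambda>(k, x). A \<alpha> k x) kx) < e) sequentially"
  proof (rule eventually_mono, intro ballI)
    fix n kx assume n: "normL (diffL (S n) A) < e / ?C" and kx: "kx \<in> dom_pts \<alpha>"
    have "dist (S n \<alpha> (fst kx) (snd kx)) (A \<alpha> (fst kx) (snd kx)) \<le> ?C * normL (diffL (S n) A)"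
      using kx by (intro dist_coeffs_le_normL_diffL[OF p spec[OF S] A]) simp
    also have "\<dots> < e" using n C by (simp add: field_simps)
    finally show "dist ((\<lambda>(k, x). S n \<alpha> k x) kx) ((\<lambda>(k, x). A \<alpha> k x) kx) < e"
      by (simp add: split_beta)
  qed
qed

lemma normL_tendsto_if_uniform_limit:
  fixes S :: "nat \<Rightarrow> ('n::finite, 'm::finite) coeffs" and A :: "('n, 'm) coeffs"
  assumes p: "p > 0" and S: "\<forall>n. \<forall>\<alpha>. cellwise_const p \<alpha> (S n \<alpha>)" and A: "\<forall>\<alpha>. cellwise_const p \<alpha> (A \<alpha>)"
    and U: "\<forall>\<alpha>. uniform_limit (dom_pts \<alpha>) (\<lambda>n (k, x). S n \<alpha> k x) (\<lambda>(k, x). A \<alpha> k x) sequentially"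
  shows "(\<lambda>n. normL (diffL (S n) A)) \<longlonglongrightarrow> 0"
proof -
  let ?C = "real CARD('m)"
  have D: "\<forall>\<alpha>. cellwise_const p \<alpha> (diffL (S n) A \<alpha>)" for n using cellwise_const_diffL S A by blast
  have "(\<lambda>n. coeff_norm (diffL (S n) A) \<alpha>) \<longlonglongrightarrow> 0" for \<alpha>
  proof (rule tendstoI)
    fix e :: real assume e: "e > 0"
    then have "eventually (\<lambda>n. \<forall>kx\<in>dom_pts \<alpha>. dist ((\<lambda>(k, x). S n \<alpha> k x) kx) ((\<lambda>(k, x). A \<alpha> k x) kx) < e / (?C + 1)) sequentially"
      using U unfolding uniform_limit_iff by simp
    then show "eventually (\<lambda>n. dist (coeff_norm (diffL (S n) A) \<alpha>) 0 < e) sequentially"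
    proof (rule eventually_mono)
      fix n assume n: "\<forall>kx\<in>dom_pts \<alpha>. dist ((\<lambda>(k, x). S n \<alpha> k x) kx) ((\<lambda>(k, x). A \<alpha> k x) kx) < e / (?C + 1)"
      have "coeff_norm (diffL (S n) A) \<alpha> \<le> ?C * (e / (?C + 1))"
      proof (rule coeff_norm_le_of_norm_bound[OF p D])
        fix k x assume "(k, x) \<in> dom_pts \<alpha>"
        then show "norm (diffL (S n) A \<alpha> k x) \<le> e / (?C + 1)"
          using n by (fastforce simp: dist_norm diffL_def)
      qed
      also have "\<dots> < e" using e by (simp add: field_simps)
      finally show "dist (coeff_norm (diffL (S n) A) \<alpha>) 0 < e"
        using coeff_norm_nonneg[OF p D] by simp
    qed
  qed
  then have "(\<lambda>n. \<Sum>\<alpha>\<in>UNIV. coeff_norm (diffL (S n) A) \<alpha>) \<longlonglongrightarrow> (\<Sum>\<alpha>\<in>(UNIV::'n set set). 0)"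
    by (intro tendsto_sum) auto
  then show ?thesis unfolding normL_eq_sum_coeff_norm by simp
qed

lemma normL_tendsto_iff_uniform_limit:
  fixes S :: "nat \<Rightarrow> ('n::finite, 'm::finite) coeffs" and A :: "('n, 'm) coeffs"
  assumes p: "p > 0" and S: "\<forall>n. \<forall>\<alpha>. cellwise_const p \<alpha> (S n \<alpha>)" and A: "\<forall>\<alpha>. cellwise_const p \<alpha> (A \<alpha>)"
  shows "(\<lambda>n. normL (diffL (S n) A)) \<longlonglongrightarrow> 0 \<longleftrightarrow>
         (\<forall>\<alpha>. uniform_limit (dom_pts \<alpha>) (\<lambda>n (k, x). S n \<alpha> k x) (\<lambda>(k, x). A \<alpha> k x) sequentially)"
  using uniform_limit_if_normL_tendsto[OF p S A] normL_tendsto_if_uniform_limit[OF p S A] by blast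

lemma uniformly_Cauchy_if_normL_Cauchy:
  fixes S :: "nat \<Rightarrow> ('n::finite, 'm::finite) coeffs"
  assumes p: "p > 0" and S: "\<forall>n. \<forall>\<alpha>. cellwise_const p \<alpha> (S n \<alpha>)"
    and Ca: "\<forall>e>0. \<exists>n0. \<forall>m\<ge>n0. \<forall>n\<ge>n0. normL (diffL (S m) (S n)) < e"
  shows "uniformly_Cauchy_on (dom_pts \<alpha>) (\<lambda>n (k, x). S n \<alpha> k x)"
  unfolding uniformly_Cauchy_on_def
proof (intro allI impI)
  fix e :: real assume e: "e > 0"
  let ?C = "real CARD('m)"
  have C: "?C > 0" by simp
  obtain n0 where n0: "\<forall>m\<ge>n0. \<forall>n\<ge>n0. normL (diffL (S m) (S n)) < e / ?C"
    using Ca e C by (meson divide_pos_pos)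
  show "\<exists>M. \<forall>kx\<in>dom_pts \<alpha>. \<forall>m\<ge>M. \<forall>n\<ge>M. dist ((\<lambda>(k, x). S m \<alpha> k x) kx) ((\<lambda>(k, x). S n \<alpha> k x) kx) < e"
  proof (intro exI ballI allI impI)
    fix kx m n assume kx: "kx \<in> dom_pts \<alpha>" and mn: "n0 \<le> m" "n0 \<le> n"
    have "dist (S m \<alpha> (fst kx) (snd kx)) (S n \<alpha> (fst kx) (snd kx)) \<le> ?C * normL (diffL (S m) (S n))"
      using kx by (intro dist_coeffs_le_normL_diffL[OF p spec[OF S] spec[OF S]]) simp
    also have "\<dots> < e" using n0 mn C by (simp add: field_simps)
    finally show "dist ((\<lambda>(k, x). S m \<alpha> k x) kx) ((\<lambda>(k, x). S n \<alpha> k x) kx) < e"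
      by (simp add: split_beta)
  qed
qed

lemma cellwise_const_limit:
  fixes f :: "nat \<Rightarrow> ('n \<Rightarrow> real) \<Rightarrow> ('n \<Rightarrow> real) \<Rightarrow> 'b::t2_space"
  assumes "\<forall>n. cellwise_const p \<alpha> (f n)"
    and lim: "\<And>k x. (k, x) \<in> dom_pts \<alpha> \<Longrightarrow> (\<lambda>n. f n k x) \<longlonglongrightarrow> g k x"
  shows "cellwise_const p \<alpha> g"
  unfolding cellwise_const_def
proof (intro allI impI)
  fix k x k' x' assume a: "(k, x) \<in> dom_pts \<alpha>" "(k', x') \<in> dom_pts \<alpha>" "same_cell p \<alpha> k x k' x'"
  have "f n k x = f n k' x'" for n using assms(1) a unfolding cellwise_const_def by blast
  then have "(\<lambda>n. f n k x) \<longlonglongrightarrow> g k' x'" using lim[OF a(2)] by simp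
  then show "g k x = g k' x'" using lim[OF a(1)] LIMSEQ_unique by blast
qed

lemma normL_Cauchy_imp_convergent:
  fixes S :: "nat \<Rightarrow> ('n::finite, 'm::finite) coeffs"
  assumes p: "p > 0" and S: "\<forall>n. is_coeffs p (S n)"
    and Ca: "\<forall>e>0. \<exists>n0. \<forall>m\<ge>n0. \<forall>n\<ge>n0. normL (diffL (S m) (S n)) < e"
  shows "\<exists>A. is_coeffs p A \<and> (\<lambda>n. normL (diffL (S n) A)) \<longlonglongrightarrow> 0"
proof -
  have cS: "\<forall>n. \<forall>\<alpha>. cellwise_const p \<alpha> (S n \<alpha>)" using S is_coeffs_iff_cellwise_const[OF p] by blast
  have "\<exists>g. uniform_limit (dom_pts \<alpha>) (\<lambda>n (k, x). S n \<alpha> k x) g sequentially" for \<alpha> :: "'n set"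
    using Cauchy_uniformly_convergent[OF uniformly_Cauchy_if_normL_Cauchy[OF p cS Ca]]
    unfolding uniformly_convergent_on_def by blast
  then have "\<forall>\<alpha>. \<exists>g. uniform_limit (dom_pts \<alpha>) (\<lambda>n (k, x). S n \<alpha> k x) g sequentially" by blast
  from choice[OF this] obtain g where g: "\<And>\<alpha>. uniform_limit (dom_pts \<alpha>) (\<lambda>n (k, x). S n \<alpha> k x) (g \<alpha>) sequentially"
    by blast
  define A :: "('n, 'm) coeffs" where "A = (\<lambda>\<alpha> k x. g \<alpha> (k, x))"
  have gA: "g \<alpha> = (\<lambda>(k, x). A \<alpha> k x)" for \<alpha> unfolding A_def by auto
  have lim: "(\<lambda>n. S n \<alpha> k x) \<longlonglongrightarrow> A \<alpha> k x" if "(k, x) \<in> dom_pts \<alpha>" for \<alpha> k x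
    using tendsto_uniform_limitI[OF g that] unfolding A_def by simp
  have cA: "\<forall>\<alpha>. cellwise_const p \<alpha> (A \<alpha>)"
  proof
    fix \<alpha> :: "'n set"
    show "cellwise_const p \<alpha> (A \<alpha>)"
      using cS lim by (intro cellwise_const_limit[of p \<alpha> "\<lambda>n. S n \<alpha>"]) auto
  qed
  have "(\<lambda>n. normL (diffL (S n) A)) \<longlonglongrightarrow> 0"
    using normL_tendsto_if_uniform_limit[OF p cS cA] g gA by simp
  then show ?thesis using cA is_coeffs_iff_cellwise_const[OF p] by blast
qed

section \<open>Integration over the unit cube\<close>

lemma prob_space_unitI: "prob_space unitI"
proof (rule prob_spaceI)
  have "space unitI = {0..<1::real}" unfolding unitI_def by (simp add: space_restrict_space)
  then show "emeasure unitI (space unitI) = 1"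
    unfolding unitI_def by (simp add: emeasure_restrict_space)
qed

lemma space_unitI: "space unitI = {0..<1}"
  unfolding unitI_def by (simp add: space_restrict_space)

lemma product_sigma_finite_unitI: "product_sigma_finite (\<lambda>_. unitI)"
  unfolding product_sigma_finite_def using prob_space_unitI prob_space_imp_sigma_finite by blast

lemma prob_space_cube: "prob_space (cube \<alpha>)"
  unfolding cube_def by (rule prob_space_PiM) (rule prob_space_unitI)

lemma space_cube: "space (cube \<alpha>) = \<alpha> \<rightarrow>\<^sub>E {0..<1}"
  unfolding cube_def by (simp add: space_PiM space_unitI)

lemma pair_sigma_finite_cube: "pair_sigma_finite (cube I) (cube J)"
proof -
  interpret I: prob_space "cube I" by (rule prob_space_cube)
  interpret J: prob_space "cube J" by (rule prob_space_cube)
  show ?thesis by unfold_locales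
qed

lemma sets_unitI_Ico: "0 \<le> a \<Longrightarrow> b \<le> 1 \<Longrightarrow> {a ..< b} \<in> sets unitI"
  unfolding unitI_def by (subst sets_restrict_space_iff) auto

lemma emeasure_unitI_Ico: "0 \<le> a \<Longrightarrow> a \<le> b \<Longrightarrow> b \<le> 1 \<Longrightarrow> emeasure unitI {a ..< b} = ennreal (b - a)"
  unfolding unitI_def by (subst emeasure_restrict_space) auto

lemma emeasure_cube_box:
  fixes I :: "'n::finite set"
  assumes H: "\<And>i. i \<in> I \<Longrightarrow> 0 \<le> a i \<and> a i \<le> b i \<and> b i \<le> 1"
  shows "emeasure (cube I) (Pi\<^sub>E I (\<lambda>i. {a i ..< b i})) = (\<Prod>i\<in>I. ennreal (b i - a i))"
proof -
  interpret P: product_sigma_finite "\<lambda>_. unitI" by (rule product_sigma_finite_unitI)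
  have "emeasure (cube I) (Pi\<^sub>E I (\<lambda>i. {a i ..< b i})) = (\<Prod>i\<in>I. emeasure unitI {a i ..< b i})"
    unfolding cube_def using H by (intro P.emeasure_PiM) (auto intro!: sets_unitI_Ico)
  also have "\<dots> = (\<Prod>i\<in>I. ennreal (b i - a i))"
    using H by (intro prod.cong refl emeasure_unitI_Ico) auto
  finally show ?thesis .
qed

lemma measure_cube_box:
  fixes I :: "'n::finite set"
  assumes H: "\<And>i. i \<in> I \<Longrightarrow> 0 \<le> a i \<and> a i \<le> b i \<and> b i \<le> 1"
  shows "measure (cube I) (Pi\<^sub>E I (\<lambda>i. {a i ..< b i})) = (\<Prod>i\<in>I. (b i - a i))"
proof -
  have "(\<Prod>i\<in>I. ennreal (b i - a i)) = ennreal (\<Prod>i\<in>I. (b i - a i))"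
    using H by (intro prod_ennreal) auto
  moreover have "(\<Prod>i\<in>I. (b i - a i)) \<ge> 0" using H by (intro prod_nonneg) auto
  moreover have "emeasure (cube I) (Pi\<^sub>E I (\<lambda>i. {a i ..< b i})) = (\<Prod>i\<in>I. ennreal (b i - a i))"
    by (rule emeasure_cube_box) (use H in auto)
  ultimately show ?thesis unfolding measure_def by simp
qed

lemma measurable_merge_pt:
  "(\<lambda>kx. merge_pt \<alpha> (fst kx) (snd kx)) \<in> measurable (cube UNIV \<Otimes>\<^sub>M cube \<alpha>) (cube UNIV)"
  unfolding cube_def
proof (rule measurable_PiM_single')
  fix i :: 'a assume "i \<in> UNIV"
  show "(\<lambda>kx. merge_pt \<alpha> (fst kx) (snd kx) i) \<in> measurable (Pi\<^sub>M UNIV (\<lambda>_. unitI) \<Otimes>\<^sub>M Pi\<^sub>M \<alpha> (\<lambda>_. unitI)) unitI"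
  proof (cases "i \<in> \<alpha>")
    case True
    then show ?thesis unfolding merge_pt_def by simp
  next
    case False
    then show ?thesis unfolding merge_pt_def by simp
  qed
next
  show "(\<lambda>kx. merge_pt \<alpha> (fst kx) (snd kx)) \<in> space (Pi\<^sub>M UNIV (\<lambda>_. unitI) \<Otimes>\<^sub>M Pi\<^sub>M \<alpha> (\<lambda>_. unitI)) \<rightarrow> UNIV \<rightarrow>\<^sub>E space unitI"
    by (auto simp: space_pair_measure space_PiM merge_pt_def PiE_def Pi_def)
qed

lemma merge_pt_merge:
  "merge_pt \<alpha> (merge (- \<alpha>) \<alpha> (a, b)) x = merge (- \<alpha>) \<alpha> (a, x)"
  unfolding merge_pt_def merge_def by auto

lemma cube_UNIV_split: "cube (UNIV :: 'n set) = PiM (- \<alpha> \<union> \<alpha>) (\<lambda>_. unitI)"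
  unfolding cube_def by (simp add: Un_commute)

lemma nn_integral_merge_pt:
  fixes f :: "('n::finite \<Rightarrow> real) \<Rightarrow> ennreal"
  assumes f[measurable]: "f \<in> borel_measurable (cube UNIV)"
  shows "(\<integral>\<^sup>+k. (\<integral>\<^sup>+x. f (merge_pt \<alpha> k x) \<partial>cube \<alpha>) \<partial>cube UNIV) = (\<integral>\<^sup>+k. f k \<partial>cube UNIV)"
proof -
  interpret P: product_sigma_finite "\<lambda>_. unitI" by (rule product_sigma_finite_unitI)
  interpret Ca: prob_space "cube \<alpha>" by (rule prob_space_cube)
  have dj: "- \<alpha> \<inter> \<alpha> = {}" "finite (- \<alpha>)" "finite \<alpha>" by auto
  have mm: "(\<lambda>kx. merge_pt \<alpha> (fst kx) (snd kx)) \<in> measurable (cube UNIV \<Otimes>\<^sub>M cube \<alpha>) (cube UNIV)"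
    by (rule measurable_merge_pt)
  have fm: "(\<lambda>kx. f (merge_pt \<alpha> (fst kx) (snd kx))) \<in> borel_measurable (cube UNIV \<Otimes>\<^sub>M cube \<alpha>)"
    using measurable_comp[OF mm f] by (simp add: comp_def)
  have Gm: "(\<lambda>k. \<integral>\<^sup>+x. f (merge_pt \<alpha> k x) \<partial>cube \<alpha>) \<in> borel_measurable (cube UNIV)"
    using Ca.borel_measurable_nn_integral[of "\<lambda>k x. f (merge_pt \<alpha> k x)" "cube UNIV"] fm
    by (simp add: split_beta')
  have fm2: "f \<in> borel_measurable (PiM (- \<alpha> \<union> \<alpha>) (\<lambda>_. unitI))"
    using f cube_UNIV_split[of \<alpha>] by simp
  have Gm2: "(\<lambda>k. \<integral>\<^sup>+x. f (merge_pt \<alpha> k x) \<partial>cube \<alpha>) \<in> borel_measurable (PiM (- \<alpha> \<union> \<alpha>) (\<lambda>_. unitI))"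
    using Gm cube_UNIV_split[of \<alpha>] by simp
  have "(\<integral>\<^sup>+k. (\<integral>\<^sup>+x. f (merge_pt \<alpha> k x) \<partial>cube \<alpha>) \<partial>cube UNIV)
      = (\<integral>\<^sup>+a. (\<integral>\<^sup>+b. (\<integral>\<^sup>+x. f (merge_pt \<alpha> (merge (- \<alpha>) \<alpha> (a, b)) x) \<partial>cube \<alpha>) \<partial>cube \<alpha>) \<partial>cube (- \<alpha>))"
    unfolding cube_UNIV_split[of \<alpha>] P.product_nn_integral_fold[OF dj Gm2]
    unfolding cube_def ..
  also have "\<dots> = (\<integral>\<^sup>+a. (\<integral>\<^sup>+b. (\<integral>\<^sup>+x. f (merge (- \<alpha>) \<alpha> (a, x)) \<partial>cube \<alpha>) \<partial>cube \<alpha>) \<partial>cube (- \<alpha>))"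
    unfolding merge_pt_merge ..
  also have "\<dots> = (\<integral>\<^sup>+a. (\<integral>\<^sup>+x. f (merge (- \<alpha>) \<alpha> (a, x)) \<partial>cube \<alpha>) \<partial>cube (- \<alpha>))"
    by (simp add: Ca.emeasure_space_1)
  also have "\<dots> = (\<integral>\<^sup>+k. f k \<partial>cube UNIV)"
    unfolding cube_UNIV_split[of \<alpha>] P.product_nn_integral_fold[OF dj fm2]
    unfolding cube_def ..
  finally show ?thesis .
qed

lemma measurable_nn_integral_merge_pt:
  fixes f :: "('n::finite \<Rightarrow> real) \<Rightarrow> ennreal"
  assumes f: "f \<in> borel_measurable (cube UNIV)"
  shows "(\<lambda>k. \<integral>\<^sup>+x. f (merge_pt \<alpha> k x) \<partial>cube \<alpha>) \<in> borel_measurable (cube UNIV)"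
proof -
  interpret Ca: prob_space "cube \<alpha>" by (rule prob_space_cube)
  have fm: "(\<lambda>kx. f (merge_pt \<alpha> (fst kx) (snd kx))) \<in> borel_measurable (cube UNIV \<Otimes>\<^sub>M cube \<alpha>)"
    using measurable_comp[OF measurable_merge_pt f] by (simp add: comp_def)
  show ?thesis
    using Ca.borel_measurable_nn_integral[of "\<lambda>k x. f (merge_pt \<alpha> k x)" "cube UNIV"] fm
    by (simp add: split_beta')
qed

lemma measurable_merge_pt_right: "k \<in> space (cube UNIV) \<Longrightarrow> (\<lambda>x. merge_pt \<alpha> k x) \<in> measurable (cube \<alpha>) (cube UNIV)"
  using measurable_Pair2[OF measurable_merge_pt] by simp

lemma measurable_merge_pt_slice:
  assumes u: "u \<in> borel_measurable (cube UNIV)" and k: "k \<in> space (cube UNIV)"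
  shows "(\<lambda>x. u (merge_pt \<alpha> k x)) \<in> borel_measurable (cube \<alpha>)"
proof -
  have "(\<lambda>kx. u (merge_pt \<alpha> (fst kx) (snd kx))) \<in> borel_measurable (cube UNIV \<Otimes>\<^sub>M cube \<alpha>)"
    using measurable_comp[OF measurable_merge_pt u] by (simp add: comp_def)
  from measurable_Pair2[OF this k] show ?thesis by simp
qed

lemma space_pair_in_dom_pts: "k \<in> space (cube UNIV) \<Longrightarrow> x \<in> space (cube \<alpha>) \<Longrightarrow> (k, x) \<in> dom_pts \<alpha>"
  unfolding dom_pts_def space_cube by simp

lemma merge_in_space_cube:
  "x \<in> space (cube I) \<Longrightarrow> y \<in> space (cube J) \<Longrightarrow> merge I J (x, y) \<in> space (cube (I \<union> J))"
  unfolding space_cube merge_def by (auto simp: PiE_def Pi_def extensional_def)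

lemma merge_pt_in_space_cube: "k \<in> space (cube UNIV) \<Longrightarrow> x \<in> space (cube \<alpha>) \<Longrightarrow> merge_pt \<alpha> k x \<in> space (cube UNIV)"
  unfolding space_cube merge_pt_def by (auto simp: PiE_def Pi_def)

lemma measurable_merge_cube: "merge I J \<in> measurable (cube I \<Otimes>\<^sub>M cube J) (cube (I \<union> J))"
  unfolding cube_def by (rule measurable_merge)

lemma measurable_restrict_cube: "J \<subseteq> L \<Longrightarrow> (\<lambda>z. restrict z J) \<in> measurable (cube L) (cube J)"
  unfolding cube_def by (rule measurable_restrict_subset)

lemma distr_merge_cube:
  fixes I J :: "'n::finite set"
  assumes "I \<inter> J = {}"
  shows "distr (cube I \<Otimes>\<^sub>M cube J) (cube (I \<union> J)) (merge I J) = cube (I \<union> J)"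
proof -
  interpret P: product_sigma_finite "\<lambda>_. unitI" by (rule product_sigma_finite_unitI)
  show ?thesis unfolding cube_def by (rule P.distr_merge) (use assms in auto)
qed

lemma integrable_merge_cube:
  fixes I J :: "'n::finite set" and f :: "_ \<Rightarrow> 'b::{banach, second_countable_topology}"
  assumes "I \<inter> J = {}" and f: "integrable (cube (I \<union> J)) f"
  shows "integrable (cube I \<Otimes>\<^sub>M cube J) (\<lambda>xy. f (merge I J xy))"
proof -
  have fm: "f \<in> borel_measurable (cube (I \<union> J))" using f by auto
  show ?thesis using integrable_distr_eq[OF measurable_merge_cube fm] f distr_merge_cube[OF assms(1)] by simp
qed

lemma integral_merge_cube:
  fixes I J :: "'n::finite set" and f :: "_ \<Rightarrow> 'b::{banach, second_countable_topology}"
  assumes "I \<inter> J = {}" and f: "integrable (cube (I \<union> J)) f"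
  shows "integral\<^sup>L (cube (I \<union> J)) f = (\<integral>x. (\<integral>y. f (merge I J (x, y)) \<partial>cube J) \<partial>cube I)"
proof -
  interpret P: product_sigma_finite "\<lambda>_. unitI" by (rule product_sigma_finite_unitI)
  show ?thesis using P.product_integral_fold[of I J f] assms unfolding cube_def by auto
qed

lemma nn_integral_merge_cube:
  fixes I J :: "'n::finite set"
  assumes "I \<inter> J = {}" and f: "f \<in> borel_measurable (cube (I \<union> J))"
  shows "integral\<^sup>N (cube (I \<union> J)) f = (\<integral>\<^sup>+x. (\<integral>\<^sup>+y. f (merge I J (x, y)) \<partial>cube J) \<partial>cube I)"
proof -
  interpret P: product_sigma_finite "\<lambda>_. unitI" by (rule product_sigma_finite_unitI)
  show ?thesis using P.product_nn_integral_fold[of I J f] assms unfolding cube_def by auto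
qed

lemma merge_pt_merge_pt: "merge_pt \<beta> (merge_pt \<alpha> k x) y = merge_pt (\<alpha> \<union> \<beta>) k (merge (\<alpha> - \<beta>) \<beta> (x, y))"
  unfolding merge_pt_def merge_def by auto

lemma merge_merge_Diff: "merge (\<alpha> - \<beta>) \<beta> (merge (\<alpha> - \<beta>) (\<alpha> \<inter> \<beta>) (x1, w), y) = merge (\<alpha> - \<beta>) \<beta> (x1, y)"
  unfolding merge_def by (auto simp: fun_eq_iff)

lemma merge_merge_Diff_Int: "merge (\<alpha> - \<beta>) (\<alpha> \<inter> \<beta>) (merge (\<alpha> - \<beta>) \<beta> (x1, y), w) = merge (\<alpha> - \<beta>) (\<alpha> \<inter> \<beta>) (x1, w)"
  unfolding merge_def by (auto simp: fun_eq_iff)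

lemma restrict_merge_Diff: "y \<in> space (cube \<beta>) \<Longrightarrow> restrict (merge (\<alpha> - \<beta>) \<beta> (x1, y)) \<beta> = y"
  unfolding merge_def space_cube by (auto simp: fun_eq_iff PiE_def extensional_def)

lemma merge_Diff_Int_restrict: "merge (\<alpha> - \<beta>) (\<alpha> \<inter> \<beta>) (z, w) = merge (\<alpha> - \<beta>) (\<alpha> \<inter> \<beta>) (restrict z (\<alpha> - \<beta>), w)"
  unfolding merge_def by (auto simp: fun_eq_iff)

lemma merge_Diff_restrict: "merge (\<alpha> - \<beta>) \<beta> (x, y) = merge (\<alpha> - \<beta>) \<beta> (restrict x (\<alpha> - \<beta>), y)"
  unfolding merge_def by (auto simp: fun_eq_iff)

lemma nn_integral_square_le:
  assumes P: "prob_space M" and g: "g \<in> borel_measurable M"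
  shows "(\<integral>\<^sup>+x. g x \<partial>M)\<^sup>2 \<le> (\<integral>\<^sup>+x. (g x)\<^sup>2 \<partial>M)"
proof -
  interpret prob_space M by (rule P)
  have "(\<integral>\<^sup>+x. g x * 1 \<partial>M)\<^sup>2 \<le> (\<integral>\<^sup>+x. g x ^ 2 \<partial>M) * (\<integral>\<^sup>+x. 1 ^ 2 \<partial>M)"
    by (rule Cauchy_Schwarz_nn_integral) (auto simp: g)
  then show ?thesis by (simp add: emeasure_space_1)
qed

lemma isL2_imp_integrable:
  assumes u: "isL2 u"
  shows "integrable (cube UNIV) u"
proof -
  interpret Q: prob_space "cube UNIV" by (rule prob_space_cube)
  have um: "u \<in> borel_measurable (cube UNIV)" and ui: "integrable (cube UNIV) (\<lambda>k. (norm (u k))\<^sup>2)"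
    using u unfolding isL2_def by auto
  have "integrable (cube UNIV) (\<lambda>k. 1 + (norm (u k))\<^sup>2)" using ui by simp
  moreover have "norm (u k) \<le> norm (1 + (norm (u k))\<^sup>2 :: real)" for k
  proof -
    have h: "0 \<le> (norm (u k) - 1) * (norm (u k) - 1)" by simp
    have "norm (u k) \<le> 1 + (norm (u k))\<^sup>2"
      using h norm_ge_zero[of "u k"] unfolding power2_eq_square by (simp add: algebra_simps) (smt (verit) norm_ge_zero)
    then show ?thesis by simp
  qed
  ultimately show ?thesis using um
    by (intro Bochner_Integration.integrable_bound[where f="\<lambda>k. 1 + (norm (u k))\<^sup>2 :: real" and M="cube UNIV" and g=u]) auto
qed

lemma AE_integrable_merge_pt:
  fixes u :: "('n::finite \<Rightarrow> real) \<Rightarrow> complex^'m::finite"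
  assumes u: "integrable (cube UNIV) u"
  shows "AE k in cube UNIV. integrable (cube \<gamma>) (\<lambda>z. u (merge_pt \<gamma> k z))"
proof -
  have um: "u \<in> borel_measurable (cube UNIV)" using u by auto
  have fm: "(\<lambda>k. ennreal (norm (u k))) \<in> borel_measurable (cube UNIV)" using um by measurable
  have fin: "(\<integral>\<^sup>+k. ennreal (norm (u k)) \<partial>cube UNIV) < \<infinity>" using u unfolding integrable_iff_bounded by simp
  have "AE k in cube UNIV. (\<integral>\<^sup>+z. ennreal (norm (u (merge_pt \<gamma> k z))) \<partial>cube \<gamma>) \<noteq> \<infinity>"
    using nn_integral_PInf_AE[OF measurable_nn_integral_merge_pt[OF fm, of \<gamma>]] nn_integral_merge_pt[OF fm, of \<gamma>] fin by simp
  then show ?thesis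
  proof (rule AE_mp[OF _ AE_I2], intro impI)
    fix k assume k: "k \<in> space (cube UNIV)" and H: "(\<integral>\<^sup>+z. ennreal (norm (u (merge_pt \<gamma> k z))) \<partial>cube \<gamma>) \<noteq> \<infinity>"
    show "integrable (cube \<gamma>) (\<lambda>z. u (merge_pt \<gamma> k z))"
      unfolding integrable_iff_bounded using measurable_merge_pt_slice[OF um k] H by (simp add: top.not_eq_extremum)
  qed
qed

lemma row_norm_integral_le:
  fixes F :: "'a \<Rightarrow> complex^'m::finite^'m"
  assumes P: "prob_space M" and c: "c \<ge> 0" and H: "\<And>w. w \<in> space M \<Longrightarrow> row_norm (F w) i \<le> c"
  shows "row_norm (\<integral>w. F w \<partial>M) i \<le> c"
proof (cases "integrable M F")
  case True
  interpret prob_space M by (rule P)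
  have bl: "bounded_linear (\<lambda>N::complex^'m^'m. N $ i $ j)" for j
    by (rule bounded_linear_intro[where K=1]) (auto simp: norm_matrix_entry_le)
  have ij: "integrable M (\<lambda>w. F w $ i $ j)" for j using integrable_bounded_linear[OF bl True] .
  have "row_norm (\<integral>w. F w \<partial>M) i = (\<Sum>j\<in>UNIV. norm (\<integral>w. F w $ i $ j \<partial>M))"
    unfolding row_norm_def using integral_bounded_linear[OF bl True] by simp
  also have "\<dots> \<le> (\<Sum>j\<in>UNIV. \<integral>w. norm (F w $ i $ j) \<partial>M)"
    by (intro sum_mono integral_norm_bound)
  also have "\<dots> = (\<integral>w. row_norm (F w) i \<partial>M)"
    unfolding row_norm_def using ij Bochner_Integration.integral_sum[where I=UNIV and M=M and f="\<lambda>j w. norm (F w $ i $ j)", symmetric] by auto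
  also have "\<dots> \<le> (\<integral>w. c \<partial>M)"
    using c H by (intro integral_mono') auto
  also have "\<dots> = c" by (simp add: prob_space)
  finally show ?thesis .
next
  case False
  then show ?thesis using c by (simp add: not_integrable_integral_eq row_norm_def)
qed

lemma pred_cell_index:
  assumes p: "p > 0"
  shows "Measurable.pred unitI (\<lambda>y. cell_index p y = K)"
proof -
  have "{y \<in> space unitI. cell_index p y = K} = {real K / real p ..< (real K + 1) / real p} \<inter> {0..<1}"
  proof -
    have eqc: "cell_index p y = K \<longleftrightarrow> y \<in> {real K / real p ..< (real K + 1) / real p}" if "0 \<le> y" for y
      using chi_eq_cell_index[OF p that, of K] unfolding chi_def by (auto simp: indicator_def split: if_splits)
    show ?thesis
    proof (intro set_eqI)
      fix y
      show "y \<in> {y \<in> space unitI. cell_index p y = K} \<longleftrightarrow> y \<in> {real K / real p ..< (real K + 1) / real p} \<inter> {0..<1}"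
      proof (cases "0 \<le> y")
        case True
        then show ?thesis using eqc[OF True] by (auto simp: space_unitI)
      next
        case False
        have "real K / real p \<ge> 0" by simp
        then show ?thesis using False by (auto simp: space_unitI simp del: divide_nonneg_nonneg zero_le_divide_iff; linarith)
      qed
    qed
  qed
  moreover have "{real K / real p ..< (real K + 1) / real p} \<inter> {0..<1} \<in> sets unitI"
    unfolding unitI_def by (subst sets_restrict_space_iff) auto
  ultimately show ?thesis unfolding pred_def by simp
qed

lemma measurable_cell_indices:
  fixes \<alpha> :: "'n::finite set"
  assumes p: "p > 0"
  shows "(\<lambda>kx. ((\<lambda>i. cell_index p (fst kx i)), (\<lambda>i\<in>\<alpha>. cell_index p (snd kx i))))
    \<in> measurable (cube UNIV \<Otimes>\<^sub>M cube \<alpha>) (count_space (((UNIV :: 'n set) \<rightarrow>\<^sub>E {..<p}) \<times> (\<alpha> \<rightarrow>\<^sub>E {..<p})))"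
    (is "_ \<in> measurable ?M (count_space ?I)")
proof -
  have cI: "countable ?I" by (intro countable_finite finite_cartesian_product finite_PiE) auto
  have pc1: "Measurable.pred ?M (\<lambda>kx. cell_index p (fst kx i) = c)" for i c
  proof -
    have "(\<lambda>kx. fst kx i) \<in> measurable ?M unitI" unfolding cube_def by simp
    then show ?thesis using measurable_compose[OF _ pred_cell_index[OF p]] by blast
  qed
  have pc2: "Measurable.pred ?M (\<lambda>kx. cell_index p (snd kx i) = c)" if "i \<in> \<alpha>" for i c
  proof -
    have "(\<lambda>kx. snd kx i) \<in> measurable ?M unitI" unfolding cube_def using that by simp
    then show ?thesis using measurable_compose[OF _ pred_cell_index[OF p]] by blast
  qed
  define g where "g kx = ((\<lambda>i. cell_index p (fst kx i)), (\<lambda>i\<in>\<alpha>. cell_index p (snd kx i)))"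
    for kx :: "('n \<Rightarrow> real) \<times> ('n \<Rightarrow> real)"
  have "g \<in> measurable ?M (count_space ?I)"
    unfolding measurable_count_space_eq_countable[OF cI]
  proof safe
    fix kx :: "('n \<Rightarrow> real) \<times> ('n \<Rightarrow> real)" assume "kx \<in> space ?M"
    then show "g kx \<in> ?I" unfolding g_def using cell_index_less[OF p]
      by (auto simp: space_pair_measure space_cube PiE_def Pi_def)
  next
    fix K L assume KL: "K \<in> (UNIV :: 'n set) \<rightarrow>\<^sub>E {..<p}" "L \<in> \<alpha> \<rightarrow>\<^sub>E {..<p}"
    have "g -` {(K, L)} \<inter> space ?M
        = {kx \<in> space ?M. (\<forall>i\<in>UNIV. cell_index p (fst kx i) = K i) \<and> (\<forall>i\<in>\<alpha>. cell_index p (snd kx i) = L i)}"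
      using KL unfolding g_def by (auto simp: PiE_def extensional_def fun_eq_iff)
    also have "\<dots> \<in> sets ?M"
    proof -
      have "Measurable.pred ?M (\<lambda>kx. (\<forall>i\<in>UNIV. cell_index p (fst kx i) = K i) \<and> (\<forall>i\<in>\<alpha>. cell_index p (snd kx i) = L i))"
        using pc1 pc2 by (intro pred_intros_logic pred_intros_finite) auto
      then show ?thesis unfolding pred_def by simp
    qed
    finally show "g -` {(K, L)} \<inter> space ?M \<in> sets ?M" .
  qed
  then show ?thesis by (simp add: g_def[abs_def])
qed

text \<open>A cellwise constant coefficient is a function of the (finitely many) cell indices of its arguments.\<close>

lemma measurable_coeff:
  fixes A :: "('n::finite, 'm::finite) coeffs"
  assumes p: "p > 0" and A: "cellwise_const p \<alpha> (A \<alpha>)"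
  shows "(\<lambda>kx. A \<alpha> (fst kx) (snd kx)) \<in> borel_measurable (cube UNIV \<Otimes>\<^sub>M cube \<alpha>)"
proof -
  let ?M = "cube UNIV \<Otimes>\<^sub>M cube \<alpha>"
  define g where "g kx = ((\<lambda>i. cell_index p (fst kx i)), (\<lambda>i\<in>\<alpha>. cell_index p (snd kx i)))" for kx :: "('n \<Rightarrow> real) \<times> ('n \<Rightarrow> real)"
  define f where "f KL kx = A \<alpha> (\<lambda>i. cell_start p (fst KL i)) (\<lambda>i\<in>\<alpha>. cell_start p (snd KL i))"
    for KL :: "('n \<Rightarrow> nat) \<times> ('n \<Rightarrow> nat)" and kx :: "('n \<Rightarrow> real) \<times> ('n \<Rightarrow> real)"
  have cI: "countable (((UNIV::'n set) \<rightarrow>\<^sub>E {..<p}) \<times> (\<alpha> \<rightarrow>\<^sub>E {..<p}))"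
    by (intro countable_finite finite_cartesian_product finite_PiE) auto
  have fg: "(\<lambda>kx. f (g kx) kx) \<in> borel_measurable ?M"
    unfolding g_def by (rule measurable_compose_countable'[OF _ measurable_cell_indices[OF p] cI]) (simp add: f_def)
  show ?thesis
  proof (rule measurable_cong[THEN iffD1, OF _ fg])
    fix kx :: "('n \<Rightarrow> real) \<times> ('n \<Rightarrow> real)" assume kx: "kx \<in> space ?M"
    obtain k x where kxe: "kx = (k, x)" by fastforce
    have d: "(k, x) \<in> dom_pts \<alpha>" using kx kxe unfolding dom_pts_def by (simp add: space_pair_measure space_cube)
    have d2: "((\<lambda>i. cell_start p (cell_index p (k i))), (\<lambda>i\<in>\<alpha>. cell_start p (cell_index p (x i)))) \<in> dom_pts \<alpha>"
      using d cell_start_in_unit cell_index_less[OF p] unfolding dom_pts_def by (auto simp: PiE_def Pi_def)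
    have sc: "same_cell p \<alpha> (\<lambda>i. cell_start p (cell_index p (k i))) (\<lambda>i\<in>\<alpha>. cell_start p (cell_index p (x i))) k x"
      unfolding same_cell_def using p by (simp add: cell_index_cell_start)
    have "f (g kx) kx = A \<alpha> (\<lambda>i. cell_start p (cell_index p (k i))) (\<lambda>i\<in>\<alpha>. cell_start p (cell_index p (x i)))"
      unfolding f_def g_def kxe by (simp cong: restrict_cong)
    also have "\<dots> = A \<alpha> k x" using A d d2 sc unfolding cellwise_const_def by blast
    finally show "f (g kx) kx = A \<alpha> (fst kx) (snd kx)" by (simp add: kxe)
  qed
qed

lemma measurable_coeff_comp:
  fixes A :: "('n::finite, 'm::finite) coeffs"
  assumes p: "p > 0" and A: "cellwise_const p \<alpha> (A \<alpha>)"
    and f: "f \<in> measurable M (cube UNIV)" and g: "g \<in> measurable M (cube \<alpha>)"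
  shows "(\<lambda>\<omega>. A \<alpha> (f \<omega>) (g \<omega>)) \<in> borel_measurable M"
proof -
  have "(\<lambda>\<omega>. (f \<omega>, g \<omega>)) \<in> measurable M (cube UNIV \<Otimes>\<^sub>M cube \<alpha>)" using f g by (rule measurable_Pair)
  from measurable_comp[OF this measurable_coeff[where A=A and \<alpha>=\<alpha> and p=p, OF p A]] show ?thesis by (simp add: comp_def)
qed

section \<open>Boundedness on L2\<close>

definition opL_part :: "('n::finite, 'm::finite) coeffs \<Rightarrow> 'n set \<Rightarrow> (('n \<Rightarrow> real) \<Rightarrow> complex^'m) \<Rightarrow> ('n \<Rightarrow> real) \<Rightarrow> complex^'m" where
  "opL_part A \<alpha> u k = (\<integral>x. A \<alpha> k x *v u (merge_pt \<alpha> k x) \<partial>cube \<alpha>)"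

lemma opL_eq_sum_opL_part: "opL A u k = (\<Sum>\<alpha>\<in>UNIV. opL_part A \<alpha> u k)"
  unfolding opL_def opL_part_def ..

lemma measurable_opL_integrand:
  fixes A :: "('n::finite, 'm::finite) coeffs"
  assumes p: "p > 0" and A: "cellwise_const p \<alpha> (A \<alpha>)" and u: "u \<in> borel_measurable (cube UNIV)"
  shows "(\<lambda>kx. A \<alpha> (fst kx) (snd kx) *v u (merge_pt \<alpha> (fst kx) (snd kx))) \<in> borel_measurable (cube UNIV \<Otimes>\<^sub>M cube \<alpha>)"
proof -
  have "(\<lambda>kx. u (merge_pt \<alpha> (fst kx) (snd kx))) \<in> borel_measurable (cube UNIV \<Otimes>\<^sub>M cube \<alpha>)"
    using measurable_comp[OF measurable_merge_pt u] by (simp add: comp_def)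
  then show ?thesis
    using borel_measurable_continuous_Pair[OF measurable_coeff[where A=A and \<alpha>=\<alpha> and p=p, OF p A] _ continuous_on_matrix_vector_mult] by simp
qed

lemma measurable_opL_part:
  fixes A :: "('n::finite, 'm::finite) coeffs"
  assumes p: "p > 0" and A: "cellwise_const p \<alpha> (A \<alpha>)" and u: "u \<in> borel_measurable (cube UNIV)"
  shows "opL_part A \<alpha> u \<in> borel_measurable (cube UNIV)"
proof -
  interpret Ca: prob_space "cube \<alpha>" by (rule prob_space_cube)
  show ?thesis unfolding opL_part_def
    by (rule Ca.borel_measurable_lebesgue_integral) (use measurable_opL_integrand[where A=A and \<alpha>=\<alpha> and p=p, OF p A u] in \<open>simp add: split_beta'\<close>)
qed

lemma norm_opL_part_le:
  fixes A :: "('n::finite, 'm::finite) coeffs"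
  assumes p: "p > 0" and A: "\<forall>\<alpha>. cellwise_const p \<alpha> (A \<alpha>)" and u: "u \<in> borel_measurable (cube UNIV)"
    and k: "k \<in> space (cube UNIV)"
  shows "ennreal (norm (opL_part A \<alpha> u k)) \<le> ennreal (coeff_bound A \<alpha>) * (\<integral>\<^sup>+x. ennreal (norm (u (merge_pt \<alpha> k x))) \<partial>cube \<alpha>)"
proof -
  have gm: "(\<lambda>x. ennreal (norm (u (merge_pt \<alpha> k x)))) \<in> borel_measurable (cube \<alpha>)"
    using measurable_merge_pt_slice[OF u k] by measurable
  have "ennreal (norm (opL_part A \<alpha> u k)) \<le> (\<integral>\<^sup>+x. ennreal (coeff_bound A \<alpha> * norm (u (merge_pt \<alpha> k x))) \<partial>cube \<alpha>)"
  proof (cases "integrable (cube \<alpha>) (\<lambda>x. A \<alpha> k x *v u (merge_pt \<alpha> k x))")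
    case True
    have "ennreal (norm (opL_part A \<alpha> u k)) \<le> (\<integral>\<^sup>+x. norm (A \<alpha> k x *v u (merge_pt \<alpha> k x)) \<partial>cube \<alpha>)"
      unfolding opL_part_def by (rule integral_norm_bound_ennreal[OF True])
    also have "\<dots> \<le> (\<integral>\<^sup>+x. ennreal (coeff_bound A \<alpha> * norm (u (merge_pt \<alpha> k x))) \<partial>cube \<alpha>)"
      by (intro nn_integral_mono ennreal_leI norm_coeff_mult_le[OF p A space_pair_in_dom_pts[OF k]])
    finally show ?thesis .
  next
    case False
    then show ?thesis unfolding opL_part_def by (simp add: not_integrable_integral_eq)
  qed
  also have "\<dots> = ennreal (coeff_bound A \<alpha>) * (\<integral>\<^sup>+x. ennreal (norm (u (merge_pt \<alpha> k x))) \<partial>cube \<alpha>)"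
    using coeff_bound_nonneg[OF p A] by (simp add: ennreal_mult nn_integral_cmult gm)
  finally show ?thesis .
qed

lemma norm_opL_part_square_le:
  fixes A :: "('n::finite, 'm::finite) coeffs"
  assumes p: "p > 0" and A: "\<forall>\<alpha>. cellwise_const p \<alpha> (A \<alpha>)" and u: "u \<in> borel_measurable (cube UNIV)"
    and k: "k \<in> space (cube UNIV)"
  shows "ennreal ((norm (opL_part A \<alpha> u k))\<^sup>2) \<le> ennreal ((coeff_bound A \<alpha>)\<^sup>2) * (\<integral>\<^sup>+x. ennreal ((norm (u (merge_pt \<alpha> k x)))\<^sup>2) \<partial>cube \<alpha>)"
proof -
  let ?c = "coeff_bound A \<alpha>"
  have gm: "(\<lambda>x. ennreal (norm (u (merge_pt \<alpha> k x)))) \<in> borel_measurable (cube \<alpha>)"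
    using measurable_merge_pt_slice[OF u k] by measurable
  have "ennreal ((norm (opL_part A \<alpha> u k))\<^sup>2) = (ennreal (norm (opL_part A \<alpha> u k)))\<^sup>2"
    by (simp add: ennreal_power)
  also have "\<dots> \<le> (ennreal ?c * (\<integral>\<^sup>+x. ennreal (norm (u (merge_pt \<alpha> k x))) \<partial>cube \<alpha>))\<^sup>2"
    by (rule power_mono[OF norm_opL_part_le[OF p A u k]]) simp
  also have "\<dots> = (ennreal ?c)\<^sup>2 * (\<integral>\<^sup>+x. ennreal (norm (u (merge_pt \<alpha> k x))) \<partial>cube \<alpha>)\<^sup>2"
    by (simp add: power_mult_distrib)
  also have "\<dots> \<le> (ennreal ?c)\<^sup>2 * (\<integral>\<^sup>+x. (ennreal (norm (u (merge_pt \<alpha> k x))))\<^sup>2 \<partial>cube \<alpha>)"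
    by (intro mult_left_mono nn_integral_square_le[OF prob_space_cube gm]) simp
  also have "\<dots> = ennreal (?c\<^sup>2) * (\<integral>\<^sup>+x. ennreal ((norm (u (merge_pt \<alpha> k x)))\<^sup>2) \<partial>cube \<alpha>)"
    using coeff_bound_nonneg[OF p A] by (simp add: ennreal_power)
  finally show ?thesis .
qed

lemma nn_integral_opL_part_square_le:
  fixes A :: "('n::finite, 'm::finite) coeffs"
  assumes p: "p > 0" and A: "\<forall>\<alpha>. cellwise_const p \<alpha> (A \<alpha>)" and u: "u \<in> borel_measurable (cube UNIV)"
  shows "(\<integral>\<^sup>+k. ennreal ((norm (opL_part A \<alpha> u k))\<^sup>2) \<partial>cube UNIV)
    \<le> ennreal ((coeff_bound A \<alpha>)\<^sup>2) * (\<integral>\<^sup>+k. ennreal ((norm (u k))\<^sup>2) \<partial>cube UNIV)"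
proof -
  have fm: "(\<lambda>k. ennreal ((norm (u k))\<^sup>2)) \<in> borel_measurable (cube UNIV)" using u by measurable
  have "(\<integral>\<^sup>+k. ennreal ((norm (opL_part A \<alpha> u k))\<^sup>2) \<partial>cube UNIV) \<le>
        (\<integral>\<^sup>+k. ennreal ((coeff_bound A \<alpha>)\<^sup>2) * (\<integral>\<^sup>+x. ennreal ((norm (u (merge_pt \<alpha> k x)))\<^sup>2) \<partial>cube \<alpha>) \<partial>cube UNIV)"
    by (intro nn_integral_mono norm_opL_part_square_le[OF p A u])
  also have "\<dots> = ennreal ((coeff_bound A \<alpha>)\<^sup>2) * (\<integral>\<^sup>+k. (\<integral>\<^sup>+x. ennreal ((norm (u (merge_pt \<alpha> k x)))\<^sup>2) \<partial>cube \<alpha>) \<partial>cube UNIV)"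
    using measurable_nn_integral_merge_pt[OF fm, of \<alpha>] by (simp add: nn_integral_cmult)
  also have "\<dots> = ennreal ((coeff_bound A \<alpha>)\<^sup>2) * (\<integral>\<^sup>+k. ennreal ((norm (u k))\<^sup>2) \<partial>cube UNIV)"
    using nn_integral_merge_pt[OF fm, of \<alpha>] by simp
  finally show ?thesis .
qed

lemma norm_opL_square_le:
  fixes A :: "('n::finite, 'm::finite) coeffs"
  shows "(norm (opL A u k))\<^sup>2 \<le> real (card (UNIV :: 'n set set)) * (\<Sum>\<alpha>\<in>UNIV. (norm (opL_part A \<alpha> u k))\<^sup>2)"
proof -
  have "norm (opL A u k) \<le> (\<Sum>\<alpha>\<in>UNIV. norm (opL_part A \<alpha> u k))"
    unfolding opL_eq_sum_opL_part by (rule norm_sum)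
  then have "(norm (opL A u k))\<^sup>2 \<le> (\<Sum>\<alpha>\<in>UNIV. norm (opL_part A \<alpha> u k))\<^sup>2"
    by (simp add: power_mono)
  also have "\<dots> \<le> real (card (UNIV :: 'n set set)) * (\<Sum>\<alpha>\<in>UNIV. (norm (opL_part A \<alpha> u k))\<^sup>2)"
    by (rule square_sum_le_card_sum_squares)
  finally show ?thesis .
qed

lemma sum_coeff_bound_square_le:
  fixes A :: "('n::finite, 'm::finite) coeffs"
  assumes p: "p > 0" and A: "\<forall>\<alpha>. cellwise_const p \<alpha> (A \<alpha>)"
  shows "(\<Sum>\<alpha>\<in>UNIV. (coeff_bound A \<alpha>)\<^sup>2) \<le> (real CARD('m) * normL A)\<^sup>2"
proof -
  have "(\<Sum>\<alpha>\<in>UNIV. (coeff_bound A \<alpha>)\<^sup>2) \<le> (\<Sum>\<alpha>\<in>UNIV. coeff_bound A \<alpha>)\<^sup>2"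
    by (rule sum_squares_le_square_sum) (rule coeff_bound_nonneg[OF p A])
  also have "(\<Sum>\<alpha>\<in>UNIV. coeff_bound A \<alpha>) = real CARD('m) * normL A"
    unfolding coeff_bound_def normL_eq_sum_coeff_norm by (simp add: sum_distrib_left)
  finally show ?thesis .
qed

lemma measurable_opL:
  fixes A :: "('n::finite, 'm::finite) coeffs"
  assumes p: "p > 0" and A: "\<forall>\<alpha>. cellwise_const p \<alpha> (A \<alpha>)" and u: "u \<in> borel_measurable (cube UNIV)"
  shows "opL A u \<in> borel_measurable (cube UNIV)"
proof -
  have "opL_part A \<alpha> u \<in> borel_measurable (cube UNIV)" for \<alpha>
    using measurable_opL_part[OF p _ u] A by blast
  then have "(\<lambda>k. \<Sum>\<alpha>\<in>UNIV. opL_part A \<alpha> u k) \<in> borel_measurable (cube UNIV)"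
    by (intro borel_measurable_sum) auto
  then show ?thesis unfolding opL_eq_sum_opL_part[abs_def] by simp
qed

lemma opL_L2_bound:
  fixes A :: "('n::finite, 'm::finite) coeffs"
  assumes p: "p > 0" and A: "\<forall>\<alpha>. cellwise_const p \<alpha> (A \<alpha>)" and u: "isL2 u"
  shows "isL2 (opL A u) \<and>
    L2norm (opL A u) \<le> sqrt (real (card (UNIV :: 'n set set))) * real CARD('m) * normL A * L2norm u"
proof -
  let ?Q = "cube (UNIV :: 'n set)"
  define N where "N = real (card (UNIV :: 'n set set))"
  define K where "K = N * (real CARD('m) * normL A)\<^sup>2"
  have um: "u \<in> borel_measurable ?Q" and ui: "integrable ?Q (\<lambda>k. (norm (u k))\<^sup>2)"
    using u unfolding isL2_def by auto
  have Om: "opL A u \<in> borel_measurable ?Q" by (rule measurable_opL[OF p A um])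
  have Nu: "(\<integral>\<^sup>+k. ennreal ((norm (u k))\<^sup>2) \<partial>?Q) = ennreal ((L2norm u)\<^sup>2)"
    unfolding L2norm_def by (simp add: nn_integral_eq_integral[OF ui])
  have "opL_part A \<alpha> u \<in> borel_measurable ?Q" for \<alpha>
    using measurable_opL_part[OF p _ um] A by blast
  then have sm: "(\<lambda>k. ennreal ((norm (opL_part A \<alpha> u k))\<^sup>2)) \<in> borel_measurable ?Q" for \<alpha>
    by measurable
  have "(\<integral>\<^sup>+k. ennreal ((norm (opL A u k))\<^sup>2) \<partial>?Q) \<le> (\<integral>\<^sup>+k. ennreal N * (\<Sum>\<alpha>\<in>UNIV. ennreal ((norm (opL_part A \<alpha> u k))\<^sup>2)) \<partial>?Q)"
    by (intro nn_integral_mono order_trans[OF ennreal_leI[OF norm_opL_square_le]]) (simp add: N_def ennreal_mult sum_nonneg)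
  also have "\<dots> = ennreal N * (\<Sum>\<alpha>\<in>UNIV. (\<integral>\<^sup>+k. ennreal ((norm (opL_part A \<alpha> u k))\<^sup>2) \<partial>?Q))"
    by (simp only: nn_integral_cmult[OF borel_measurable_sum[OF sm]] nn_integral_sum[OF sm])
  also have "\<dots> \<le> ennreal N * (\<Sum>\<alpha>\<in>UNIV. ennreal ((coeff_bound A \<alpha>)\<^sup>2) * ennreal ((L2norm u)\<^sup>2))"
    using nn_integral_opL_part_square_le[OF p A um] Nu by (intro mult_left_mono sum_mono) auto
  also have "\<dots> = ennreal (N * (\<Sum>\<alpha>\<in>UNIV. (coeff_bound A \<alpha>)\<^sup>2) * (L2norm u)\<^sup>2)"
    by (simp add: ennreal_mult[symmetric] sum_distrib_right[symmetric] N_def sum_nonneg mult.assoc)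
  also have "\<dots> \<le> ennreal (K * (L2norm u)\<^sup>2)"
    using sum_coeff_bound_square_le[OF p A] by (intro ennreal_leI mult_right_mono) (auto simp: K_def N_def)
  finally have I: "(\<integral>\<^sup>+k. ennreal ((norm (opL A u k))\<^sup>2) \<partial>?Q) \<le> ennreal (K * (L2norm u)\<^sup>2)" .
  have Oi: "integrable ?Q (\<lambda>k. (norm (opL A u k))\<^sup>2)"
    using I Om by (intro integrableI_nonneg) (auto simp: le_less_trans)
  have "ennreal (\<integral>k. (norm (opL A u k))\<^sup>2 \<partial>?Q) = (\<integral>\<^sup>+k. ennreal ((norm (opL A u k))\<^sup>2) \<partial>?Q)"
    by (rule nn_integral_eq_integral[OF Oi, symmetric]) simp
  then have "ennreal (\<integral>k. (norm (opL A u k))\<^sup>2 \<partial>?Q) \<le> ennreal (K * (L2norm u)\<^sup>2)"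
    using I by simp
  then have "(\<integral>k. (norm (opL A u k))\<^sup>2 \<partial>?Q) \<le> K * (L2norm u)\<^sup>2"
    by (simp add: ennreal_le_iff K_def N_def)
  then have "L2norm (opL A u) \<le> sqrt (K * (L2norm u)\<^sup>2)"
    unfolding L2norm_def[of "opL A u"] by simp
  also have "\<dots> = sqrt N * real CARD('m) * normL A * L2norm u"
    using normL_nonneg[OF p A] by (simp add: K_def real_sqrt_mult L2norm_def)
  finally show ?thesis using Om Oi unfolding isL2_def N_def by simp
qed

section \<open>Composition\<close>

lemma sum_pairs_group_union:
  fixes P :: "'n::finite set \<Rightarrow> 'n set \<Rightarrow> 'a::comm_monoid_add"
  shows "(\<Sum>\<alpha>\<in>UNIV. \<Sum>\<beta>\<in>UNIV. P \<alpha> \<beta>) = (\<Sum>\<gamma>\<in>UNIV. \<Sum>ab\<in>{ab. fst ab \<union> snd ab = \<gamma>}. P (fst ab) (snd ab))"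
proof -
  have "(\<Sum>\<alpha>\<in>UNIV. \<Sum>\<beta>\<in>UNIV. P \<alpha> \<beta>) = (\<Sum>ab\<in>UNIV. P (fst ab) (snd ab))"
    unfolding UNIV_Times_UNIV[symmetric] sum.cartesian_product by (simp add: case_prod_beta)
  also have "\<dots> = (\<Sum>\<gamma>\<in>UNIV. \<Sum>ab\<in>{ab. fst ab \<union> snd ab = \<gamma>}. P (fst ab) (snd ab))"
    using sum.group[of UNIV UNIV "\<lambda>ab::'n set \<times> 'n set. fst ab \<union> snd ab" "\<lambda>ab. P (fst ab) (snd ab)"] by simp
  finally show ?thesis .
qed

text \<open>The contribution of \<open>A\<^sub>\<alpha>\<close> and \<open>B\<^sub>\<beta>\<close> to the coefficient of \<open>\<alpha> \<union> \<beta>\<close> of the composition: the variable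
  of \<open>A\<^sub>\<alpha>\<close> agrees with \<open>z\<close> on \<open>\<alpha> - \<beta>\<close> and its part \<open>w\<close> on \<open>\<alpha> \<inter> \<beta>\<close>, which \<open>B\<^sub>\<beta>\<close> overwrites by \<open>z\<close>,
  is integrated out.\<close>

definition comp_coeff :: "('n, 'm::finite) coeffs \<Rightarrow> ('n, 'm) coeffs \<Rightarrow> 'n set \<Rightarrow> 'n set \<Rightarrow> ('n \<Rightarrow> real) \<Rightarrow> ('n \<Rightarrow> real) \<Rightarrow> complex^'m^'m" where
  "comp_coeff A B \<alpha> \<beta> k z = (\<integral>w. A \<alpha> k (merge (\<alpha> - \<beta>) (\<alpha> \<inter> \<beta>) (z, w)) **
       B \<beta> (merge_pt \<alpha> k (merge (\<alpha> - \<beta>) (\<alpha> \<inter> \<beta>) (z, w))) (restrict z \<beta>) \<partial>cube (\<alpha> \<inter> \<beta>))"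

definition comp_coeffs :: "('n, 'm::finite) coeffs \<Rightarrow> ('n, 'm) coeffs \<Rightarrow> ('n, 'm) coeffs" where
  "comp_coeffs A B \<gamma> k z = (\<Sum>ab\<in>{ab. fst ab \<union> snd ab = \<gamma>}. comp_coeff A B (fst ab) (snd ab) k z)"

lemma merge_in_dom_pts:
  assumes "(k, z) \<in> dom_pts \<gamma>" "\<alpha> \<union> \<beta> = \<gamma>" "w \<in> space (cube (\<alpha> \<inter> \<beta>))"
  shows "(k, merge (\<alpha> - \<beta>) (\<alpha> \<inter> \<beta>) (z, w)) \<in> dom_pts \<alpha>"
    and "(merge_pt \<alpha> k (merge (\<alpha> - \<beta>) (\<alpha> \<inter> \<beta>) (z, w)), restrict z \<beta>) \<in> dom_pts \<beta>"
  using assms unfolding dom_pts_def space_cube merge_def merge_pt_def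
  by (auto simp: PiE_def Pi_def extensional_def)

lemma cellwise_const_comp_coeff:
  fixes A B :: "('n::finite, 'm::finite) coeffs"
  assumes A: "\<forall>\<alpha>. cellwise_const p \<alpha> (A \<alpha>)" and B: "\<forall>\<alpha>. cellwise_const p \<alpha> (B \<alpha>)" and g: "\<alpha> \<union> \<beta> = \<gamma>"
  shows "cellwise_const p \<gamma> (comp_coeff A B \<alpha> \<beta>)"
  unfolding cellwise_const_def
proof (intro allI impI)
  fix k z k' z' assume kz: "(k, z) \<in> dom_pts \<gamma>" and kz': "(k', z') \<in> dom_pts \<gamma>" and sc: "same_cell p \<gamma> k z k' z'"
  show "comp_coeff A B \<alpha> \<beta> k z = comp_coeff A B \<alpha> \<beta> k' z'"
    unfolding comp_coeff_def
  proof (rule Bochner_Integration.integral_cong[OF refl])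
    fix w assume w: "w \<in> space (cube (\<alpha> \<inter> \<beta>))"
    let ?x = "merge (\<alpha> - \<beta>) (\<alpha> \<inter> \<beta>) (z, w)" and ?x' = "merge (\<alpha> - \<beta>) (\<alpha> \<inter> \<beta>) (z', w)"
    have s1: "same_cell p \<alpha> k ?x k' ?x'" using sc g unfolding same_cell_def merge_def by auto
    have s2: "same_cell p \<beta> (merge_pt \<alpha> k ?x) (restrict z \<beta>) (merge_pt \<alpha> k' ?x') (restrict z' \<beta>)"
      using sc g unfolding same_cell_def merge_def merge_pt_def by auto
    have "A \<alpha> k ?x = A \<alpha> k' ?x'" using A merge_in_dom_pts(1)[OF kz g w] merge_in_dom_pts(1)[OF kz' g w] s1 unfolding cellwise_const_def by blast
    moreover have "B \<beta> (merge_pt \<alpha> k ?x) (restrict z \<beta>) = B \<beta> (merge_pt \<alpha> k' ?x') (restrict z' \<beta>)"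
      using B merge_in_dom_pts(2)[OF kz g w] merge_in_dom_pts(2)[OF kz' g w] s2 unfolding cellwise_const_def by blast
    ultimately show "A \<alpha> k ?x ** B \<beta> (merge_pt \<alpha> k ?x) (restrict z \<beta>) = A \<alpha> k' ?x' ** B \<beta> (merge_pt \<alpha> k' ?x') (restrict z' \<beta>)"
      by simp
  qed
qed

lemma cellwise_const_comp_coeffs:
  fixes A B :: "('n::finite, 'm::finite) coeffs"
  assumes A: "\<forall>\<alpha>. cellwise_const p \<alpha> (A \<alpha>)" and B: "\<forall>\<alpha>. cellwise_const p \<alpha> (B \<alpha>)"
  shows "\<forall>\<gamma>. cellwise_const p \<gamma> (comp_coeffs A B \<gamma>)"
proof
  fix \<gamma> :: "'n set"
  have "cellwise_const p \<gamma> (comp_coeff A B (fst ab) (snd ab))" if "ab \<in> {ab. fst ab \<union> snd ab = \<gamma>}" for ab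
    using cellwise_const_comp_coeff[OF A B] that by auto
  then show "cellwise_const p \<gamma> (comp_coeffs A B \<gamma>)" unfolding cellwise_const_def comp_coeffs_def by (intro allI impI sum.cong) (auto intro!: sum.cong)
qed

lemma row_norm_comp_coeff_le:
  fixes A B :: "('n::finite, 'm::finite) coeffs"
  assumes p: "p > 0" and A: "\<forall>\<alpha>. cellwise_const p \<alpha> (A \<alpha>)" and B: "\<forall>\<alpha>. cellwise_const p \<alpha> (B \<alpha>)" and g: "\<alpha> \<union> \<beta> = \<gamma>"
    and kz: "(k, z) \<in> dom_pts \<gamma>"
  shows "row_norm (comp_coeff A B \<alpha> \<beta> k z) i \<le> coeff_norm A \<alpha> * coeff_norm B \<beta>"
  unfolding comp_coeff_def
proof (rule row_norm_integral_le[OF prob_space_cube])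
  show "0 \<le> coeff_norm A \<alpha> * coeff_norm B \<beta>" using coeff_norm_nonneg[OF p A] coeff_norm_nonneg[OF p B] by simp
  fix w assume w: "w \<in> space (cube (\<alpha> \<inter> \<beta>))"
  let ?x = "merge (\<alpha> - \<beta>) (\<alpha> \<inter> \<beta>) (z, w)"
  have "row_norm (A \<alpha> k ?x ** B \<beta> (merge_pt \<alpha> k ?x) (restrict z \<beta>)) i \<le> row_norm (A \<alpha> k ?x) i * coeff_norm B \<beta>"
    by (rule row_norm_matrix_mult_le) (use row_norm_le_coeff_norm[OF p B merge_in_dom_pts(2)[OF kz g w]] in \<open>simp add: row_norm_def\<close>)
  also have "\<dots> \<le> coeff_norm A \<alpha> * coeff_norm B \<beta>"
    using row_norm_le_coeff_norm[OF p A merge_in_dom_pts(1)[OF kz g w]] coeff_norm_nonneg[OF p B]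
    by (intro mult_right_mono) (auto simp: row_norm_def)
  finally show "row_norm (A \<alpha> k ?x ** B \<beta> (merge_pt \<alpha> k ?x) (restrict z \<beta>)) i \<le> coeff_norm A \<alpha> * coeff_norm B \<beta>" .
qed

lemma normL_comp_coeffs_le:
  fixes A B :: "('n::finite, 'm::finite) coeffs"
  assumes p: "p > 0" and A: "\<forall>\<alpha>. cellwise_const p \<alpha> (A \<alpha>)" and B: "\<forall>\<alpha>. cellwise_const p \<alpha> (B \<alpha>)"
  shows "normL (comp_coeffs A B) \<le> normL A * normL B"
proof -
  have C: "\<forall>\<gamma>. cellwise_const p \<gamma> (comp_coeffs A B \<gamma>)" by (rule cellwise_const_comp_coeffs[OF A B])
  have "coeff_norm (comp_coeffs A B) \<gamma> \<le> (\<Sum>ab\<in>{ab. fst ab \<union> snd ab = \<gamma>}. coeff_norm A (fst ab) * coeff_norm B (snd ab))" for \<gamma>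
  proof (rule coeff_norm_le[OF p C])
    fix k z i assume kz: "(k, z) \<in> dom_pts \<gamma>"
    have "row_norm ((comp_coeffs A B) \<gamma> k z) i \<le> (\<Sum>ab\<in>{ab. fst ab \<union> snd ab = \<gamma>}. row_norm (comp_coeff A B (fst ab) (snd ab) k z) i)"
      unfolding row_norm_def comp_coeffs_def row_norm_def
      by (subst sum.swap) (intro sum_mono, simp add: norm_sum)
    also have "\<dots> \<le> (\<Sum>ab\<in>{ab. fst ab \<union> snd ab = \<gamma>}. coeff_norm A (fst ab) * coeff_norm B (snd ab))"
      by (intro sum_mono row_norm_comp_coeff_le[OF p A B _ kz]) auto
    finally show "row_norm ((comp_coeffs A B) \<gamma> k z) i \<le> (\<Sum>ab\<in>{ab. fst ab \<union> snd ab = \<gamma>}. coeff_norm A (fst ab) * coeff_norm B (snd ab))" .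
  qed
  then have "normL (comp_coeffs A B) \<le> (\<Sum>\<gamma>\<in>UNIV. \<Sum>ab\<in>{ab. fst ab \<union> snd ab = \<gamma>}. coeff_norm A (fst ab) * coeff_norm B (snd ab))"
    unfolding normL_eq_sum_coeff_norm by (intro sum_mono) auto
  also have "\<dots> = normL A * normL B"
    unfolding normL_eq_sum_coeff_norm sum_product by (rule sum_pairs_group_union[symmetric])
  finally show ?thesis .
qed

context
  fixes A B :: "('n::finite, 'm::finite) coeffs" and p :: nat
    and u :: "('n \<Rightarrow> real) \<Rightarrow> complex^'m" and k :: "'n \<Rightarrow> real" and \<alpha> \<beta> :: "'n set"
  assumes p: "p > 0" and cA: "\<forall>\<alpha>. cellwise_const p \<alpha> (A \<alpha>)" and cB: "\<forall>\<alpha>. cellwise_const p \<alpha> (B \<alpha>)"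
    and um: "u \<in> borel_measurable (cube UNIV)" and k: "k \<in> space (cube UNIV)"
    and u_integrable: "integrable (cube (\<alpha> \<union> \<beta>)) (\<lambda>z. u (merge_pt (\<alpha> \<union> \<beta>) k z))"
begin

lemma measurable_A_slice: "(\<lambda>x. A \<alpha> k x) \<in> borel_measurable (cube \<alpha>)"
  using measurable_coeff_comp[where A=A and \<alpha>=\<alpha> and p=p, OF p cA[rule_format] measurable_const[OF k] measurable_ident] by simp

lemma measurable_B_slice: "(\<lambda>xy. B \<beta> (merge_pt \<alpha> k (fst xy)) (snd xy)) \<in> borel_measurable (cube \<alpha> \<Otimes>\<^sub>M cube \<beta>)"
proof -
  have f: "(\<lambda>xy. merge_pt \<alpha> k (fst xy)) \<in> measurable (cube \<alpha> \<Otimes>\<^sub>M cube \<beta>) (cube UNIV)"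
    using measurable_comp[OF measurable_fst measurable_merge_pt_right[OF k]] by (simp add: comp_def)
  show ?thesis
    using measurable_coeff_comp[where A=B and \<alpha>=\<beta> and p=p, OF p cB[rule_format] f measurable_snd] by simp
qed

lemma measurable_inner_opL_part: "(\<lambda>x. opL_part B \<beta> u (merge_pt \<alpha> k x)) \<in> borel_measurable (cube \<alpha>)"
  using measurable_comp[OF measurable_merge_pt_right[OF k] measurable_opL_part[where A=B and \<alpha>=\<beta> and p=p, OF p cB[rule_format] um]]
  by (simp add: comp_def)

lemma measurable_outer_integrand: "(\<lambda>x. A \<alpha> k x *v opL_part B \<beta> u (merge_pt \<alpha> k x)) \<in> borel_measurable (cube \<alpha>)"
  using borel_measurable_continuous_Pair[OF measurable_A_slice measurable_inner_opL_part continuous_on_matrix_vector_mult] by simp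

lemma measurable_coeff_product: "(\<lambda>xy. A \<alpha> k (fst xy) ** B \<beta> (merge_pt \<alpha> k (fst xy)) (snd xy)) \<in> borel_measurable (cube \<alpha> \<Otimes>\<^sub>M cube \<beta>)"
proof -
  have "(\<lambda>xy. A \<alpha> k (fst xy)) \<in> borel_measurable (cube \<alpha> \<Otimes>\<^sub>M cube \<beta>)"
    using measurable_comp[OF measurable_fst measurable_A_slice] by (simp add: comp_def)
  then show ?thesis using borel_measurable_continuous_Pair[OF _ measurable_B_slice continuous_on_matrix_matrix_mult] by simp
qed

lemma measurable_merge_Diff_Int:
  "(\<lambda>zw. merge (\<alpha> - \<beta>) (\<alpha> \<inter> \<beta>) (fst zw, snd zw)) \<in> measurable (cube (\<alpha> \<union> \<beta>) \<Otimes>\<^sub>M cube (\<alpha> \<inter> \<beta>)) (cube \<alpha>)"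
proof -
  have r: "(\<lambda>zw. (restrict (fst zw) (\<alpha> - \<beta>), snd zw)) \<in> measurable (cube (\<alpha> \<union> \<beta>) \<Otimes>\<^sub>M cube (\<alpha> \<inter> \<beta>)) (cube (\<alpha> - \<beta>) \<Otimes>\<^sub>M cube (\<alpha> \<inter> \<beta>))"
    by (intro measurable_Pair measurable_comp[OF measurable_fst measurable_restrict_cube, unfolded comp_def] measurable_snd) auto
  have "(\<lambda>zw. merge (\<alpha> - \<beta>) (\<alpha> \<inter> \<beta>) (restrict (fst zw) (\<alpha> - \<beta>), snd zw)) \<in> measurable (cube (\<alpha> \<union> \<beta>) \<Otimes>\<^sub>M cube (\<alpha> \<inter> \<beta>)) (cube \<alpha>)"
    using measurable_comp[OF r measurable_merge_cube[of "\<alpha> - \<beta>" "\<alpha> \<inter> \<beta>"]] by (simp add: comp_def Un_Diff_Int)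
  then show ?thesis by (subst merge_Diff_Int_restrict) simp
qed

lemma measurable_comp_coeff: "(\<lambda>z. comp_coeff A B \<alpha> \<beta> k z) \<in> borel_measurable (cube (\<alpha> \<union> \<beta>))"
proof -
  interpret Cc: prob_space "cube (\<alpha> \<inter> \<beta>)" by (rule prob_space_cube)
  have m1: "(\<lambda>zw. (merge (\<alpha> - \<beta>) (\<alpha> \<inter> \<beta>) (fst zw, snd zw), restrict (fst zw) \<beta>)) \<in> measurable (cube (\<alpha> \<union> \<beta>) \<Otimes>\<^sub>M cube (\<alpha> \<inter> \<beta>)) (cube \<alpha> \<Otimes>\<^sub>M cube \<beta>)"
    by (intro measurable_Pair measurable_merge_Diff_Int measurable_comp[OF measurable_fst measurable_restrict_cube, unfolded comp_def]) auto
  have "(\<lambda>zw. A \<alpha> k (merge (\<alpha> - \<beta>) (\<alpha> \<inter> \<beta>) (fst zw, snd zw)) ** B \<beta> (merge_pt \<alpha> k (merge (\<alpha> - \<beta>) (\<alpha> \<inter> \<beta>) (fst zw, snd zw))) (restrict (fst zw) \<beta>))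
        \<in> borel_measurable (cube (\<alpha> \<union> \<beta>) \<Otimes>\<^sub>M cube (\<alpha> \<inter> \<beta>))"
    using measurable_comp[OF m1 measurable_coeff_product] by (simp add: comp_def)
  then show ?thesis unfolding comp_coeff_def
    by (intro Cc.borel_measurable_lebesgue_integral) (simp add: split_beta')
qed

lemma measurable_merge_Diff:
  "(\<lambda>xy. merge (\<alpha> - \<beta>) \<beta> (fst xy, snd xy)) \<in> measurable (cube \<alpha> \<Otimes>\<^sub>M cube \<beta>) (cube (\<alpha> \<union> \<beta>))"
proof -
  have r: "(\<lambda>xy. (restrict (fst xy) (\<alpha> - \<beta>), snd xy)) \<in> measurable (cube \<alpha> \<Otimes>\<^sub>M cube \<beta>) (cube (\<alpha> - \<beta>) \<Otimes>\<^sub>M cube \<beta>)"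
    by (intro measurable_Pair measurable_comp[OF measurable_fst measurable_restrict_cube, unfolded comp_def] measurable_snd) auto
  have "(\<lambda>xy. merge (\<alpha> - \<beta>) \<beta> (restrict (fst xy) (\<alpha> - \<beta>), snd xy)) \<in> measurable (cube \<alpha> \<Otimes>\<^sub>M cube \<beta>) (cube (\<alpha> \<union> \<beta>))"
    using measurable_comp[OF r measurable_merge_cube[of "\<alpha> - \<beta>" \<beta>]] by (simp add: comp_def Un_Diff_cancel2)
  then show ?thesis by (subst merge_Diff_restrict) simp
qed

lemma norm_A_mult_le: "x \<in> space (cube \<alpha>) \<Longrightarrow> norm (A \<alpha> k x *v v) \<le> coeff_bound A \<alpha> * norm v"
  by (rule norm_coeff_mult_le[OF p cA space_pair_in_dom_pts[OF k]])

lemma norm_B_mult_le: "x \<in> space (cube \<alpha>) \<Longrightarrow> y \<in> space (cube \<beta>) \<Longrightarrow> norm (B \<beta> (merge_pt \<alpha> k x) y *v v) \<le> coeff_bound B \<beta> * norm v"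
  by (rule norm_coeff_mult_le[OF p cB space_pair_in_dom_pts[OF merge_pt_in_space_cube[OF k]]])

lemma norm_coeff_product_mult_le: "x \<in> space (cube \<alpha>) \<Longrightarrow> y \<in> space (cube \<beta>) \<Longrightarrow>
    norm ((A \<alpha> k x ** B \<beta> (merge_pt \<alpha> k x) y) *v v) \<le> coeff_bound A \<alpha> * coeff_bound B \<beta> * norm v"
proof -
  assume x: "x \<in> space (cube \<alpha>)" and y: "y \<in> space (cube \<beta>)"
  have "norm ((A \<alpha> k x ** B \<beta> (merge_pt \<alpha> k x) y) *v v) = norm (A \<alpha> k x *v (B \<beta> (merge_pt \<alpha> k x) y *v v))"
    by (simp add: matrix_vector_mul_assoc)
  also have "\<dots> \<le> coeff_bound A \<alpha> * norm (B \<beta> (merge_pt \<alpha> k x) y *v v)" by (rule norm_A_mult_le[OF x])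
  also have "\<dots> \<le> coeff_bound A \<alpha> * (coeff_bound B \<beta> * norm v)" by (intro mult_left_mono norm_B_mult_le[OF x y] coeff_bound_nonneg[OF p cA])
  finally show ?thesis by (simp add: mult.assoc)
qed

lemma norm_coeff_product_le: "x \<in> space (cube \<alpha>) \<Longrightarrow> y \<in> space (cube \<beta>) \<Longrightarrow>
    norm (A \<alpha> k x ** B \<beta> (merge_pt \<alpha> k x) y) \<le> real CARD('m) * coeff_norm A \<alpha> * coeff_norm B \<beta>"
proof -
  assume x: "x \<in> space (cube \<alpha>)" and y: "y \<in> space (cube \<beta>)"
  have "norm (A \<alpha> k x ** B \<beta> (merge_pt \<alpha> k x) y) \<le> (\<Sum>i\<in>UNIV. row_norm (A \<alpha> k x ** B \<beta> (merge_pt \<alpha> k x) y) i)"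
    by (rule norm_matrix_le_sum_row_norm)
  also have "\<dots> \<le> (\<Sum>i\<in>(UNIV::'m set). coeff_norm A \<alpha> * coeff_norm B \<beta>)"
  proof (intro sum_mono)
    fix i
    have "row_norm (A \<alpha> k x ** B \<beta> (merge_pt \<alpha> k x) y) i \<le> row_norm (A \<alpha> k x) i * coeff_norm B \<beta>"
      by (rule row_norm_matrix_mult_le) (use row_norm_le_coeff_norm[OF p cB space_pair_in_dom_pts[OF merge_pt_in_space_cube[OF k x] y]] in \<open>simp add: row_norm_def\<close>)
    also have "\<dots> \<le> coeff_norm A \<alpha> * coeff_norm B \<beta>"
      using row_norm_le_coeff_norm[OF p cA space_pair_in_dom_pts[OF k x]] coeff_norm_nonneg[OF p cB] by (intro mult_right_mono) (auto simp: row_norm_def)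
    finally show "row_norm (A \<alpha> k x ** B \<beta> (merge_pt \<alpha> k x) y) i \<le> coeff_norm A \<alpha> * coeff_norm B \<beta>" .
  qed
  finally show ?thesis by simp
qed

lemma norm_comp_coeff_mult_le: "z \<in> space (cube (\<alpha> \<union> \<beta>)) \<Longrightarrow> norm (comp_coeff A B \<alpha> \<beta> k z *v v) \<le> real CARD('m) * coeff_norm A \<alpha> * coeff_norm B \<beta> * norm v"
proof -
  assume z: "z \<in> space (cube (\<alpha> \<union> \<beta>))"
  have "norm (comp_coeff A B \<alpha> \<beta> k z *v v) \<le> (\<Sum>i\<in>UNIV. row_norm (comp_coeff A B \<alpha> \<beta> k z) i) * norm v" by (rule norm_matrix_vector_mult_le)
  also have "\<dots> \<le> (\<Sum>i\<in>(UNIV::'m set). coeff_norm A \<alpha> * coeff_norm B \<beta>) * norm v"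
    by (intro mult_right_mono sum_mono row_norm_comp_coeff_le[OF p cA cB refl space_pair_in_dom_pts[OF k z]]) auto
  finally show ?thesis by simp
qed

lemma integrable_comp_integrand: "integrable (cube (\<alpha> \<union> \<beta>)) (\<lambda>z. comp_coeff A B \<alpha> \<beta> k z *v u (merge_pt (\<alpha> \<union> \<beta>) k z))"
proof (rule Bochner_Integration.integrable_bound[where f="\<lambda>z. real CARD('m) * coeff_norm A \<alpha> * coeff_norm B \<beta> * norm (u (merge_pt (\<alpha> \<union> \<beta>) k z))"])
  show "integrable (cube (\<alpha> \<union> \<beta>)) (\<lambda>z. real CARD('m) * coeff_norm A \<alpha> * coeff_norm B \<beta> * norm (u (merge_pt (\<alpha> \<union> \<beta>) k z)))"
    using u_integrable by simp
  show "(\<lambda>z. comp_coeff A B \<alpha> \<beta> k z *v u (merge_pt (\<alpha> \<union> \<beta>) k z)) \<in> borel_measurable (cube (\<alpha> \<union> \<beta>))"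
    using borel_measurable_continuous_Pair[OF measurable_comp_coeff borel_measurable_integrable[OF u_integrable] continuous_on_matrix_vector_mult] by simp
  show "AE z in cube (\<alpha> \<union> \<beta>). norm (comp_coeff A B \<alpha> \<beta> k z *v u (merge_pt (\<alpha> \<union> \<beta>) k z))
      \<le> norm (real CARD('m) * coeff_norm A \<alpha> * coeff_norm B \<beta> * norm (u (merge_pt (\<alpha> \<union> \<beta>) k z)))"
    using norm_comp_coeff_mult_le coeff_norm_nonneg[OF p cA] coeff_norm_nonneg[OF p cB] by (intro AE_I2) (auto intro: order_trans)
qed

lemma integrable_u_merge_Diff: "integrable (cube (\<alpha> - \<beta>) \<Otimes>\<^sub>M cube \<beta>) (\<lambda>xy. u (merge_pt (\<alpha> \<union> \<beta>) k (merge (\<alpha> - \<beta>) \<beta> xy)))"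
  using integrable_merge_cube[of "\<alpha> - \<beta>" \<beta> "\<lambda>z. u (merge_pt (\<alpha> \<union> \<beta>) k z)"] u_integrable by (simp add: Un_Diff_cancel2 Diff_Int_distrib2)

lemma AE_integrable_u_slice: "AE x1 in cube (\<alpha> - \<beta>). integrable (cube \<beta>) (\<lambda>y. u (merge_pt (\<alpha> \<union> \<beta>) k (merge (\<alpha> - \<beta>) \<beta> (x1, y))))"
proof -
  interpret P: pair_sigma_finite "cube (\<alpha> - \<beta>)" "cube \<beta>" by (rule pair_sigma_finite_cube)
  show ?thesis using P.AE_integrable_fst'[OF integrable_u_merge_Diff] by simp
qed

lemma measurable_slice_nn_integral: "(\<lambda>x. \<integral>\<^sup>+y. ennreal (norm (u (merge_pt (\<alpha> \<union> \<beta>) k (merge (\<alpha> - \<beta>) \<beta> (x, y))))) \<partial>cube \<beta>) \<in> borel_measurable (cube \<alpha>)"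
proof -
  interpret Cb: prob_space "cube \<beta>" by (rule prob_space_cube)
  have "(\<lambda>xy. u (merge_pt (\<alpha> \<union> \<beta>) k (merge (\<alpha> - \<beta>) \<beta> (fst xy, snd xy)))) \<in> borel_measurable (cube \<alpha> \<Otimes>\<^sub>M cube \<beta>)"
    using measurable_comp[OF measurable_merge_Diff borel_measurable_integrable[OF u_integrable]] by (simp add: comp_def)
  then have "(\<lambda>xy. ennreal (norm (u (merge_pt (\<alpha> \<union> \<beta>) k (merge (\<alpha> - \<beta>) \<beta> (fst xy, snd xy)))))) \<in> borel_measurable (cube \<alpha> \<Otimes>\<^sub>M cube \<beta>)"
    by measurable
  then show ?thesis
    using Cb.borel_measurable_nn_integral[of "\<lambda>x y. ennreal (norm (u (merge_pt (\<alpha> \<union> \<beta>) k (merge (\<alpha> - \<beta>) \<beta> (x, y)))))" "cube \<alpha>"]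
    by (simp add: split_beta')
qed

lemma nn_integral_slice_nn_integral: "(\<integral>\<^sup>+x. (\<integral>\<^sup>+y. ennreal (norm (u (merge_pt (\<alpha> \<union> \<beta>) k (merge (\<alpha> - \<beta>) \<beta> (x, y))))) \<partial>cube \<beta>) \<partial>cube \<alpha>)
   = (\<integral>\<^sup>+z. ennreal (norm (u (merge_pt (\<alpha> \<union> \<beta>) k z))) \<partial>cube (\<alpha> \<union> \<beta>))"
proof -
  interpret Cc: prob_space "cube (\<alpha> \<inter> \<beta>)" by (rule prob_space_cube)
  let ?G = "\<lambda>x. \<integral>\<^sup>+y. ennreal (norm (u (merge_pt (\<alpha> \<union> \<beta>) k (merge (\<alpha> - \<beta>) \<beta> (x, y))))) \<partial>cube \<beta>"
  have d1: "(\<alpha> - \<beta>) \<inter> (\<alpha> \<inter> \<beta>) = {}" by auto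
  have d2: "(\<alpha> - \<beta>) \<inter> \<beta> = {}" by auto
  have Gm: "?G \<in> borel_measurable (cube ((\<alpha> - \<beta>) \<union> (\<alpha> \<inter> \<beta>)))" using measurable_slice_nn_integral by (simp add: Un_Diff_Int)
  have Vm: "(\<lambda>z. ennreal (norm (u (merge_pt (\<alpha> \<union> \<beta>) k z)))) \<in> borel_measurable (cube ((\<alpha> - \<beta>) \<union> \<beta>))"
    using borel_measurable_integrable[OF u_integrable] by (simp add: Un_Diff_cancel2)
  have "(\<integral>\<^sup>+x. ?G x \<partial>cube \<alpha>) = (\<integral>\<^sup>+x. ?G x \<partial>cube ((\<alpha> - \<beta>) \<union> (\<alpha> \<inter> \<beta>)))" by (simp add: Un_Diff_Int)
  also have "\<dots> = (\<integral>\<^sup>+x1. (\<integral>\<^sup>+w. ?G (merge (\<alpha> - \<beta>) (\<alpha> \<inter> \<beta>) (x1, w)) \<partial>cube (\<alpha> \<inter> \<beta>)) \<partial>cube (\<alpha> - \<beta>))"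
    by (rule nn_integral_merge_cube[OF d1 Gm])
  also have "\<dots> = (\<integral>\<^sup>+x1. (\<integral>\<^sup>+y. ennreal (norm (u (merge_pt (\<alpha> \<union> \<beta>) k (merge (\<alpha> - \<beta>) \<beta> (x1, y))))) \<partial>cube \<beta>) \<partial>cube (\<alpha> - \<beta>))"
    by (simp add: merge_merge_Diff Cc.emeasure_space_1)
  also have "\<dots> = (\<integral>\<^sup>+z. ennreal (norm (u (merge_pt (\<alpha> \<union> \<beta>) k z))) \<partial>cube ((\<alpha> - \<beta>) \<union> \<beta>))"
    by (rule nn_integral_merge_cube[OF d2 Vm, symmetric])
  finally show ?thesis by (simp add: Un_Diff_cancel2)
qed

lemma integrable_outer_integrand: "integrable (cube \<alpha>) (\<lambda>x. A \<alpha> k x *v opL_part B \<beta> u (merge_pt \<alpha> k x))"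
  unfolding integrable_iff_bounded
proof (intro conjI measurable_outer_integrand)
  let ?G = "\<lambda>x. \<integral>\<^sup>+y. ennreal (norm (u (merge_pt (\<alpha> \<union> \<beta>) k (merge (\<alpha> - \<beta>) \<beta> (x, y))))) \<partial>cube \<beta>"
  have pw: "ennreal (norm (A \<alpha> k x *v opL_part B \<beta> u (merge_pt \<alpha> k x))) \<le> ennreal (coeff_bound A \<alpha> * coeff_bound B \<beta>) * ?G x"
    if x: "x \<in> space (cube \<alpha>)" for x
  proof -
    have "ennreal (norm (A \<alpha> k x *v opL_part B \<beta> u (merge_pt \<alpha> k x))) \<le> ennreal (coeff_bound A \<alpha> * norm (opL_part B \<beta> u (merge_pt \<alpha> k x)))"
      by (intro ennreal_leI norm_A_mult_le[OF x])
    also have "\<dots> = ennreal (coeff_bound A \<alpha>) * ennreal (norm (opL_part B \<beta> u (merge_pt \<alpha> k x)))"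
      using coeff_bound_nonneg[OF p cA] by (simp add: ennreal_mult)
    also have "\<dots> \<le> ennreal (coeff_bound A \<alpha>) * (ennreal (coeff_bound B \<beta>) * (\<integral>\<^sup>+y. ennreal (norm (u (merge_pt \<beta> (merge_pt \<alpha> k x) y))) \<partial>cube \<beta>))"
    proof (intro mult_left_mono)
      show "ennreal (norm (opL_part B \<beta> u (merge_pt \<alpha> k x))) \<le> ennreal (coeff_bound B \<beta>) * (\<integral>\<^sup>+y. ennreal (norm (u (merge_pt \<beta> (merge_pt \<alpha> k x) y))) \<partial>cube \<beta>)"
        by (rule norm_opL_part_le[OF p cB um merge_pt_in_space_cube[OF k x]])
    qed simp
    also have "\<dots> = ennreal (coeff_bound A \<alpha> * coeff_bound B \<beta>) * ?G x"
      using coeff_bound_nonneg[OF p cA] coeff_bound_nonneg[OF p cB] by (simp add: merge_pt_merge_pt ennreal_mult mult.assoc)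
    finally show ?thesis .
  qed
  have "(\<integral>\<^sup>+x. ennreal (norm (A \<alpha> k x *v opL_part B \<beta> u (merge_pt \<alpha> k x))) \<partial>cube \<alpha>) \<le> (\<integral>\<^sup>+x. ennreal (coeff_bound A \<alpha> * coeff_bound B \<beta>) * ?G x \<partial>cube \<alpha>)"
    by (intro nn_integral_mono pw)
  also have "\<dots> = ennreal (coeff_bound A \<alpha> * coeff_bound B \<beta>) * (\<integral>\<^sup>+x. ?G x \<partial>cube \<alpha>)"
    by (rule nn_integral_cmult[OF measurable_slice_nn_integral])
  also have "\<dots> = ennreal (coeff_bound A \<alpha> * coeff_bound B \<beta>) * (\<integral>\<^sup>+z. ennreal (norm (u (merge_pt (\<alpha> \<union> \<beta>) k z))) \<partial>cube (\<alpha> \<union> \<beta>))"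
    by (simp add: nn_integral_slice_nn_integral)
  also have "\<dots> < \<infinity>" using u_integrable unfolding integrable_iff_bounded by (simp add: ennreal_mult_less_top)
  finally show "(\<integral>\<^sup>+x. ennreal (norm (A \<alpha> k x *v opL_part B \<beta> u (merge_pt \<alpha> k x))) \<partial>cube \<alpha>) < \<infinity>" .
qed

context
  fixes x1 :: "'n \<Rightarrow> real"
  assumes x1: "x1 \<in> space (cube (\<alpha> - \<beta>))"
    and u_slice: "integrable (cube \<beta>) (\<lambda>y. u (merge_pt (\<alpha> \<union> \<beta>) k (merge (\<alpha> - \<beta>) \<beta> (x1, y))))"
begin

lemma merge_x1_in_space:
  assumes "w \<in> space (cube (\<alpha> \<inter> \<beta>))"
  shows "merge (\<alpha> - \<beta>) (\<alpha> \<inter> \<beta>) (x1, w) \<in> space (cube \<alpha>)"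
  using merge_in_space_cube[OF x1 assms] by (simp add: Un_Diff_Int)

lemma measurable_coeff_product_slice:
  "(\<lambda>wy. A \<alpha> k (merge (\<alpha> - \<beta>) (\<alpha> \<inter> \<beta>) (x1, fst wy)) ** B \<beta> (merge_pt \<alpha> k (merge (\<alpha> - \<beta>) (\<alpha> \<inter> \<beta>) (x1, fst wy))) (snd wy))
    \<in> borel_measurable (cube (\<alpha> \<inter> \<beta>) \<Otimes>\<^sub>M cube \<beta>)"
proof -
  have "(\<lambda>w. merge (\<alpha> - \<beta>) (\<alpha> \<inter> \<beta>) (x1, w)) \<in> measurable (cube (\<alpha> \<inter> \<beta>)) (cube \<alpha>)"
    using measurable_Pair2[OF measurable_merge_cube[of "\<alpha> - \<beta>" "\<alpha> \<inter> \<beta>"] x1] by (simp add: Un_Diff_Int)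
  then have "(\<lambda>wy. (merge (\<alpha> - \<beta>) (\<alpha> \<inter> \<beta>) (x1, fst wy), snd wy)) \<in> measurable (cube (\<alpha> \<inter> \<beta>) \<Otimes>\<^sub>M cube \<beta>) (cube \<alpha> \<Otimes>\<^sub>M cube \<beta>)"
    by (intro measurable_Pair measurable_comp[OF measurable_fst, unfolded comp_def] measurable_snd)
  from measurable_comp[OF this measurable_coeff_product] show ?thesis by (simp add: comp_def)
qed

lemma outer_integrand_slice_eq:
  assumes w: "w \<in> space (cube (\<alpha> \<inter> \<beta>))"
  defines "x \<equiv> merge (\<alpha> - \<beta>) (\<alpha> \<inter> \<beta>) (x1, w)"
  shows "A \<alpha> k x *v opL_part B \<beta> u (merge_pt \<alpha> k x)
    = (\<integral>y. (A \<alpha> k x ** B \<beta> (merge_pt \<alpha> k x) y) *v u (merge_pt (\<alpha> \<union> \<beta>) k (merge (\<alpha> - \<beta>) \<beta> (x1, y))) \<partial>cube \<beta>)"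
proof -
  let ?v = "\<lambda>y. u (merge_pt (\<alpha> \<union> \<beta>) k (merge (\<alpha> - \<beta>) \<beta> (x1, y)))"
  have x: "x \<in> space (cube \<alpha>)" unfolding x_def by (rule merge_x1_in_space[OF w])
  have T: "opL_part B \<beta> u (merge_pt \<alpha> k x) = (\<integral>y. B \<beta> (merge_pt \<alpha> k x) y *v ?v y \<partial>cube \<beta>)"
    unfolding opL_part_def merge_pt_merge_pt x_def merge_merge_Diff ..
  have Bm: "(\<lambda>y. B \<beta> (merge_pt \<alpha> k x) y) \<in> borel_measurable (cube \<beta>)"
    using measurable_Pair2[OF measurable_B_slice x] by simp
  have Bi: "integrable (cube \<beta>) (\<lambda>y. B \<beta> (merge_pt \<alpha> k x) y *v ?v y)"
  proof (rule Bochner_Integration.integrable_bound[where f="\<lambda>y. coeff_bound B \<beta> * norm (?v y)"])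
    show "integrable (cube \<beta>) (\<lambda>y. coeff_bound B \<beta> * norm (?v y))" using u_slice by simp
    show "(\<lambda>y. B \<beta> (merge_pt \<alpha> k x) y *v ?v y) \<in> borel_measurable (cube \<beta>)"
      using borel_measurable_continuous_Pair[OF Bm borel_measurable_integrable[OF u_slice] continuous_on_matrix_vector_mult]
      by simp
    show "AE y in cube \<beta>. norm (B \<beta> (merge_pt \<alpha> k x) y *v ?v y) \<le> norm (coeff_bound B \<beta> * norm (?v y))"
      using norm_B_mult_le[OF x] coeff_bound_nonneg[OF p cB] by (intro AE_I2) (auto intro: order_trans)
  qed
  have "A \<alpha> k x *v opL_part B \<beta> u (merge_pt \<alpha> k x) = (\<integral>y. A \<alpha> k x *v (B \<beta> (merge_pt \<alpha> k x) y *v ?v y) \<partial>cube \<beta>)"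
    unfolding T by (rule integral_bounded_linear[OF matrix_vector_mul_bounded_linear Bi, symmetric])
  then show ?thesis by (simp add: matrix_vector_mul_assoc)
qed

lemma integrable_coeff_product_slice:
  "integrable (cube (\<alpha> \<inter> \<beta>) \<Otimes>\<^sub>M cube \<beta>)
    (\<lambda>wy. (A \<alpha> k (merge (\<alpha> - \<beta>) (\<alpha> \<inter> \<beta>) (x1, fst wy)) ** B \<beta> (merge_pt \<alpha> k (merge (\<alpha> - \<beta>) (\<alpha> \<inter> \<beta>) (x1, fst wy))) (snd wy))
       *v u (merge_pt (\<alpha> \<union> \<beta>) k (merge (\<alpha> - \<beta>) \<beta> (x1, snd wy))))"
  (is "integrable ?M (\<lambda>wy. ?P wy *v ?v (snd wy))")
proof (rule Bochner_Integration.integrable_bound[where f="\<lambda>wy. coeff_bound A \<alpha> * coeff_bound B \<beta> * norm (?v (snd wy))"])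
  interpret Cc: prob_space "cube (\<alpha> \<inter> \<beta>)" by (rule prob_space_cube)
  interpret Cb: prob_space "cube \<beta>" by (rule prob_space_cube)
  have vm: "(\<lambda>wy. ?v (snd wy)) \<in> borel_measurable ?M"
    using measurable_comp[OF measurable_snd borel_measurable_integrable[OF u_slice]] by (simp add: comp_def)
  have "(\<integral>\<^sup>+wy. ennreal (norm (?v (snd wy))) \<partial>?M) = (\<integral>\<^sup>+w. (\<integral>\<^sup>+y. ennreal (norm (?v y)) \<partial>cube \<beta>) \<partial>cube (\<alpha> \<inter> \<beta>))"
    using vm by (subst Cb.nn_integral_fst[symmetric]) (auto simp: split_beta')
  also have "\<dots> = (\<integral>\<^sup>+y. ennreal (norm (?v y)) \<partial>cube \<beta>)"
    by (simp add: Cc.emeasure_space_1)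
  also have "\<dots> < \<infinity>" using u_slice unfolding integrable_iff_bounded by simp
  finally have "integrable ?M (\<lambda>wy. ?v (snd wy))"
    using vm unfolding integrable_iff_bounded by simp
  then show "integrable ?M (\<lambda>wy. coeff_bound A \<alpha> * coeff_bound B \<beta> * norm (?v (snd wy)))"
    by simp
  show "(\<lambda>wy. ?P wy *v ?v (snd wy)) \<in> borel_measurable ?M"
    using borel_measurable_continuous_Pair[OF measurable_coeff_product_slice vm continuous_on_matrix_vector_mult] by simp
  show "AE wy in ?M. norm (?P wy *v ?v (snd wy)) \<le> norm (coeff_bound A \<alpha> * coeff_bound B \<beta> * norm (?v (snd wy)))"
  proof (intro AE_I2)
    fix wy assume "wy \<in> space ?M"
    then have w: "fst wy \<in> space (cube (\<alpha> \<inter> \<beta>))" and y: "snd wy \<in> space (cube \<beta>)"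
      by (auto simp: space_pair_measure)
    show "norm (?P wy *v ?v (snd wy)) \<le> norm (coeff_bound A \<alpha> * coeff_bound B \<beta> * norm (?v (snd wy)))"
      using norm_coeff_product_mult_le[OF merge_x1_in_space[OF w] y] coeff_bound_nonneg[OF p cA] coeff_bound_nonneg[OF p cB]
      by (auto intro: order_trans)
  qed
qed

lemma inner_integrals_eq:
  "(\<integral>w. A \<alpha> k (merge (\<alpha> - \<beta>) (\<alpha> \<inter> \<beta>) (x1, w)) *v opL_part B \<beta> u (merge_pt \<alpha> k (merge (\<alpha> - \<beta>) (\<alpha> \<inter> \<beta>) (x1, w))) \<partial>cube (\<alpha> \<inter> \<beta>))
   = (\<integral>y. comp_coeff A B \<alpha> \<beta> k (merge (\<alpha> - \<beta>) \<beta> (x1, y)) *v u (merge_pt (\<alpha> \<union> \<beta>) k (merge (\<alpha> - \<beta>) \<beta> (x1, y))) \<partial>cube \<beta>)"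
proof -
  interpret Cc: prob_space "cube (\<alpha> \<inter> \<beta>)" by (rule prob_space_cube)
  interpret P: pair_sigma_finite "cube (\<alpha> \<inter> \<beta>)" "cube \<beta>" by (rule pair_sigma_finite_cube)
  let ?x = "\<lambda>w. merge (\<alpha> - \<beta>) (\<alpha> \<inter> \<beta>) (x1, w)"
  let ?P = "\<lambda>w y. A \<alpha> k (?x w) ** B \<beta> (merge_pt \<alpha> k (?x w)) y"
  let ?v = "\<lambda>y. u (merge_pt (\<alpha> \<union> \<beta>) k (merge (\<alpha> - \<beta>) \<beta> (x1, y)))"
  have "(\<integral>w. A \<alpha> k (?x w) *v opL_part B \<beta> u (merge_pt \<alpha> k (?x w)) \<partial>cube (\<alpha> \<inter> \<beta>))
      = (\<integral>w. (\<integral>y. ?P w y *v ?v y \<partial>cube \<beta>) \<partial>cube (\<alpha> \<inter> \<beta>))"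
    by (rule Bochner_Integration.integral_cong[OF refl outer_integrand_slice_eq])
  also have "\<dots> = (\<integral>y. (\<integral>w. ?P w y *v ?v y \<partial>cube (\<alpha> \<inter> \<beta>)) \<partial>cube \<beta>)"
    by (rule P.Fubini_integral[symmetric]) (use integrable_coeff_product_slice in \<open>simp add: split_beta'\<close>)
  also have "\<dots> = (\<integral>y. comp_coeff A B \<alpha> \<beta> k (merge (\<alpha> - \<beta>) \<beta> (x1, y)) *v ?v y \<partial>cube \<beta>)"
  proof (rule Bochner_Integration.integral_cong[OF refl])
    fix y assume y: "y \<in> space (cube \<beta>)"
    have "integrable (cube (\<alpha> \<inter> \<beta>)) (\<lambda>w. ?P w y)"
    proof (rule Cc.integrable_const_bound[where B="real CARD('m) * coeff_norm A \<alpha> * coeff_norm B \<beta>"])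
      show "AE w in cube (\<alpha> \<inter> \<beta>). norm (?P w y) \<le> real CARD('m) * coeff_norm A \<alpha> * coeff_norm B \<beta>"
        using norm_coeff_product_le[OF merge_x1_in_space y] by (intro AE_I2) auto
      show "(\<lambda>w. ?P w y) \<in> borel_measurable (cube (\<alpha> \<inter> \<beta>))"
        using measurable_Pair1[OF measurable_coeff_product_slice y] by simp
    qed
    then have "(\<integral>w. ?P w y *v ?v y \<partial>cube (\<alpha> \<inter> \<beta>)) = (\<integral>w. ?P w y \<partial>cube (\<alpha> \<inter> \<beta>)) *v ?v y"
      by (rule integral_bounded_linear[OF bounded_linear_matrix_vector_mult_left])
    also have "(\<integral>w. ?P w y \<partial>cube (\<alpha> \<inter> \<beta>)) = comp_coeff A B \<alpha> \<beta> k (merge (\<alpha> - \<beta>) \<beta> (x1, y))"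
      unfolding comp_coeff_def merge_merge_Diff_Int restrict_merge_Diff[OF y] ..
    finally show "(\<integral>w. ?P w y *v ?v y \<partial>cube (\<alpha> \<inter> \<beta>)) = comp_coeff A B \<alpha> \<beta> k (merge (\<alpha> - \<beta>) \<beta> (x1, y)) *v ?v y" .
  qed
  finally show ?thesis .
qed

end

lemma integral_outer_eq_integral_comp:
  "(\<integral>x. A \<alpha> k x *v opL_part B \<beta> u (merge_pt \<alpha> k x) \<partial>cube \<alpha>) =
   (\<integral>z. comp_coeff A B \<alpha> \<beta> k z *v u (merge_pt (\<alpha> \<union> \<beta>) k z) \<partial>cube (\<alpha> \<union> \<beta>))"
proof -
  let ?F = "\<lambda>x. A \<alpha> k x *v opL_part B \<beta> u (merge_pt \<alpha> k x)"
  let ?R = "\<lambda>z. comp_coeff A B \<alpha> \<beta> k z *v u (merge_pt (\<alpha> \<union> \<beta>) k z)"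
  interpret Cc: prob_space "cube (\<alpha> \<inter> \<beta>)" by (rule prob_space_cube)
  interpret Cb: prob_space "cube \<beta>" by (rule prob_space_cube)
  have d1: "(\<alpha> - \<beta>) \<inter> (\<alpha> \<inter> \<beta>) = {}" and d2: "(\<alpha> - \<beta>) \<inter> \<beta> = {}" by auto
  have "(\<lambda>xw. ?F (merge (\<alpha> - \<beta>) (\<alpha> \<inter> \<beta>) xw)) \<in> borel_measurable (cube (\<alpha> - \<beta>) \<Otimes>\<^sub>M cube (\<alpha> \<inter> \<beta>))"
    using measurable_comp[OF measurable_merge_cube[of "\<alpha> - \<beta>" "\<alpha> \<inter> \<beta>", unfolded Un_Diff_Int] measurable_outer_integrand]
    by (simp add: comp_def Un_Diff_Int)
  then have mL: "(\<lambda>x1. \<integral>w. ?F (merge (\<alpha> - \<beta>) (\<alpha> \<inter> \<beta>) (x1, w)) \<partial>cube (\<alpha> \<inter> \<beta>)) \<in> borel_measurable (cube (\<alpha> - \<beta>))"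
    by (intro Cc.borel_measurable_lebesgue_integral) (simp add: split_beta')
  have "(\<lambda>xy. ?R (merge (\<alpha> - \<beta>) \<beta> xy)) \<in> borel_measurable (cube (\<alpha> - \<beta>) \<Otimes>\<^sub>M cube \<beta>)"
    using measurable_comp[OF measurable_merge_cube[of "\<alpha> - \<beta>" \<beta>, unfolded Un_Diff_cancel2] borel_measurable_integrable[OF integrable_comp_integrand]]
    by (simp add: comp_def Un_Diff_cancel2)
  then have mR: "(\<lambda>x1. \<integral>y. ?R (merge (\<alpha> - \<beta>) \<beta> (x1, y)) \<partial>cube \<beta>) \<in> borel_measurable (cube (\<alpha> - \<beta>))"
    by (intro Cb.borel_measurable_lebesgue_integral) (simp add: split_beta')
  have "AE x1 in cube (\<alpha> - \<beta>). (\<integral>w. ?F (merge (\<alpha> - \<beta>) (\<alpha> \<inter> \<beta>) (x1, w)) \<partial>cube (\<alpha> \<inter> \<beta>))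
      = (\<integral>y. ?R (merge (\<alpha> - \<beta>) \<beta> (x1, y)) \<partial>cube \<beta>)"
    using AE_integrable_u_slice by (rule AE_mp[OF _ AE_I2]) (auto intro: inner_integrals_eq)
  moreover have "(\<integral>x. ?F x \<partial>cube \<alpha>) = (\<integral>x1. (\<integral>w. ?F (merge (\<alpha> - \<beta>) (\<alpha> \<inter> \<beta>) (x1, w)) \<partial>cube (\<alpha> \<inter> \<beta>)) \<partial>cube (\<alpha> - \<beta>))"
    using integral_merge_cube[OF d1, of ?F] integrable_outer_integrand by (simp add: Un_Diff_Int)
  moreover have "(\<integral>z. ?R z \<partial>cube (\<alpha> \<union> \<beta>)) = (\<integral>x1. (\<integral>y. ?R (merge (\<alpha> - \<beta>) \<beta> (x1, y)) \<partial>cube \<beta>) \<partial>cube (\<alpha> - \<beta>))"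
    using integral_merge_cube[OF d2, of ?R] integrable_comp_integrand by (simp add: Un_Diff_cancel2)
  ultimately show ?thesis using integral_cong_AE[OF mL mR] by simp
qed

end

lemma opL_comp_coeffs_eq:
  fixes A B :: "('n::finite, 'm::finite) coeffs"
  assumes p: "p > 0" and cA: "\<forall>\<alpha>. cellwise_const p \<alpha> (A \<alpha>)" and cB: "\<forall>\<alpha>. cellwise_const p \<alpha> (B \<alpha>)"
    and um: "u \<in> borel_measurable (cube UNIV)" and k: "k \<in> space (cube UNIV)"
    and slices: "\<forall>\<gamma>. integrable (cube \<gamma>) (\<lambda>z. u (merge_pt \<gamma> k z))"
  shows "opL (comp_coeffs A B) u k = opL A (opL B u) k"
proof -
  let ?P = "\<lambda>\<alpha> \<beta>. (\<integral>z. comp_coeff A B \<alpha> \<beta> k z *v u (merge_pt (\<alpha> \<union> \<beta>) k z) \<partial>cube (\<alpha> \<union> \<beta>))"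
  have "opL A (opL B u) k = (\<Sum>\<alpha>\<in>UNIV. \<integral>x. A \<alpha> k x *v (\<Sum>\<beta>\<in>UNIV. opL_part B \<beta> u (merge_pt \<alpha> k x)) \<partial>cube \<alpha>)"
    unfolding opL_eq_sum_opL_part opL_part_def[of A] ..
  also have "\<dots> = (\<Sum>\<alpha>\<in>UNIV. \<Sum>\<beta>\<in>UNIV. \<integral>x. A \<alpha> k x *v opL_part B \<beta> u (merge_pt \<alpha> k x) \<partial>cube \<alpha>)"
  proof (rule sum.cong[OF refl])
    fix \<alpha> :: "'n set"
    have "(\<integral>x. A \<alpha> k x *v (\<Sum>\<beta>\<in>UNIV. opL_part B \<beta> u (merge_pt \<alpha> k x)) \<partial>cube \<alpha>) = (\<integral>x. (\<Sum>\<beta>\<in>UNIV. A \<alpha> k x *v opL_part B \<beta> u (merge_pt \<alpha> k x)) \<partial>cube \<alpha>)"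
      by (simp add: matrix_vector_mult_sum_right)
    also have "\<dots> = (\<Sum>\<beta>\<in>UNIV. \<integral>x. A \<alpha> k x *v opL_part B \<beta> u (merge_pt \<alpha> k x) \<partial>cube \<alpha>)"
      by (rule Bochner_Integration.integral_sum) (use integrable_outer_integrand[OF p cA cB um k] slices in blast)
    finally show "(\<integral>x. A \<alpha> k x *v (\<Sum>\<beta>\<in>UNIV. opL_part B \<beta> u (merge_pt \<alpha> k x)) \<partial>cube \<alpha>) = (\<Sum>\<beta>\<in>UNIV. \<integral>x. A \<alpha> k x *v opL_part B \<beta> u (merge_pt \<alpha> k x) \<partial>cube \<alpha>)" .
  qed
  also have "\<dots> = (\<Sum>\<alpha>\<in>UNIV. \<Sum>\<beta>\<in>UNIV. ?P \<alpha> \<beta>)"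
    using integral_outer_eq_integral_comp[OF p cA cB um k] slices by simp
  also have "\<dots> = (\<Sum>\<gamma>\<in>UNIV. \<Sum>ab\<in>{ab. fst ab \<union> snd ab = \<gamma>}. ?P (fst ab) (snd ab))"
    by (rule sum_pairs_group_union)
  also have "\<dots> = (\<Sum>\<gamma>\<in>UNIV. opL_part (comp_coeffs A B) \<gamma> u k)"
  proof (rule sum.cong[OF refl])
    fix \<gamma> :: "'n set"
    have "(\<Sum>ab\<in>{ab. fst ab \<union> snd ab = \<gamma>}. ?P (fst ab) (snd ab))
        = (\<Sum>ab\<in>{ab. fst ab \<union> snd ab = \<gamma>}. \<integral>z. comp_coeff A B (fst ab) (snd ab) k z *v u (merge_pt \<gamma> k z) \<partial>cube \<gamma>)"
      by (rule sum.cong) auto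
    also have "\<dots> = (\<integral>z. (\<Sum>ab\<in>{ab. fst ab \<union> snd ab = \<gamma>}. comp_coeff A B (fst ab) (snd ab) k z *v u (merge_pt \<gamma> k z)) \<partial>cube \<gamma>)"
    proof (rule Bochner_Integration.integral_sum[symmetric])
      fix ab :: "'n set \<times> 'n set" assume "ab \<in> {ab. fst ab \<union> snd ab = \<gamma>}"
      then have g: "fst ab \<union> snd ab = \<gamma>" by simp
      show "integrable (cube \<gamma>) (\<lambda>z. comp_coeff A B (fst ab) (snd ab) k z *v u (merge_pt \<gamma> k z))"
        using integrable_comp_integrand[OF p cA cB um k, of "fst ab" "snd ab"] slices g by simp
    qed
    also have "\<dots> = opL_part (comp_coeffs A B) \<gamma> u k"
      unfolding opL_part_def comp_coeffs_def by (simp add: matrix_vector_mult_sum_left)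
    finally show "(\<Sum>ab\<in>{ab. fst ab \<union> snd ab = \<gamma>}. ?P (fst ab) (snd ab)) = opL_part (comp_coeffs A B) \<gamma> u k" .
  qed
  also have "\<dots> = opL (comp_coeffs A B) u k" unfolding opL_eq_sum_opL_part ..
  finally show ?thesis ..
qed

lemma opL_comp_coeffs:
  fixes A B :: "('n::finite, 'm::finite) coeffs"
  assumes p: "p > 0" and A: "is_coeffs p A" and B: "is_coeffs p B"
  shows "\<exists>C. is_coeffs p C \<and> (\<forall>u. isL2 u \<longrightarrow> (AE k in cube UNIV. opL C u k = opL A (opL B u) k)) \<and>
             normL C \<le> normL A * normL B"
proof (intro exI conjI allI impI)
  have cA: "\<forall>\<alpha>. cellwise_const p \<alpha> (A \<alpha>)" and cB: "\<forall>\<alpha>. cellwise_const p \<alpha> (B \<alpha>)" using A B is_coeffs_iff_cellwise_const[OF p] by auto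
  show "is_coeffs p (comp_coeffs A B)" using cellwise_const_comp_coeffs[OF cA cB] is_coeffs_iff_cellwise_const[OF p] by blast
  show "normL (comp_coeffs A B) \<le> normL A * normL B" by (rule normL_comp_coeffs_le[OF p cA cB])
  fix u :: "('n \<Rightarrow> real) \<Rightarrow> complex^'m" assume u: "isL2 u"
  have um: "u \<in> borel_measurable (cube UNIV)" using u unfolding isL2_def by auto
  have "AE k in cube UNIV. \<forall>\<gamma>\<in>UNIV. integrable (cube \<gamma>) (\<lambda>z. u (merge_pt \<gamma> k z))"
    using AE_integrable_merge_pt[OF isL2_imp_integrable[OF u]] by (subst AE_finite_all) auto
  then show "AE k in cube UNIV. opL (comp_coeffs A B) u k = opL A (opL B u) k"
  proof (rule AE_mp[OF _ AE_I2], intro impI)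
    fix k assume "k \<in> space (cube UNIV)" "\<forall>\<gamma>\<in>UNIV. integrable (cube \<gamma>) (\<lambda>z. u (merge_pt \<gamma> k z))"
    then show "opL (comp_coeffs A B) u k = opL A (opL B u) k" using opL_comp_coeffs_eq[OF p cA cB um] by blast
  qed
qed

section \<open>Operators of norm zero\<close>

lemma normL_zero_imp_opL_zero:
  fixes A :: "('n::finite, 'm::finite) coeffs"
  assumes p: "p > 0" and cA: "\<forall>\<alpha>. cellwise_const p \<alpha> (A \<alpha>)" and z: "normL A = 0"
  shows "AE k in cube UNIV. opL A u k = 0"
proof (rule AE_I2)
  fix k :: "'n \<Rightarrow> real" assume k: "k \<in> space (cube UNIV)"
  have coeff_norm_zero: "coeff_norm A \<alpha> = 0" for \<alpha>
    using z coeff_norm_nonneg[OF p cA] unfolding normL_eq_sum_coeff_norm by (simp add: sum_nonneg_eq_0_iff)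
  have "opL_part A \<alpha> u k = 0" for \<alpha>
  proof -
    have "opL_part A \<alpha> u k = (\<integral>x. (0 :: complex^'m) \<partial>cube \<alpha>)"
      unfolding opL_part_def
    proof (rule Bochner_Integration.integral_cong[OF refl])
      fix x assume x: "x \<in> space (cube \<alpha>)"
      have "norm (A \<alpha> k x) \<le> coeff_bound A \<alpha>" by (rule norm_coeff_le_coeff_bound[OF p cA space_pair_in_dom_pts[OF k x]])
      then have "A \<alpha> k x = 0" using coeff_norm_zero by (simp add: coeff_bound_def)
      then show "A \<alpha> k x *v u (merge_pt \<alpha> k x) = 0" by simp
    qed
    then show ?thesis by simp
  qed
  then show "opL A u k = 0" unfolding opL_eq_sum_opL_part by simp
qed

lemma AE_imp_ex_in_nonnull:
  assumes "AE x in M. P x" and "S \<subseteq> space M" and "emeasure M S \<noteq> 0"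
  shows "\<exists>x\<in>S. P x"
proof (rule ccontr)
  assume "\<not> (\<exists>x\<in>S. P x)"
  obtain N where N: "{x \<in> space M. \<not> P x} \<subseteq> N" "emeasure M N = 0" "N \<in> sets M"
    using assms(1) by (rule AE_E)
  have "S \<subseteq> N" using N(1) assms(2) \<open>\<not> (\<exists>x\<in>S. P x)\<close> by blast
  then have "emeasure M S \<le> emeasure M N" using N(3) by (rule emeasure_mono)
  then show False using N(2) assms(3) by simp
qed

text \<open>Dividing by \<open>\<epsilon> ^ card \<alpha>0\<close> and letting \<open>\<epsilon> \<rightarrow> 0\<close> isolates the term of \<open>\<alpha>0\<close>.\<close>

lemma superset_power_sum_eq_zero_imp:
  fixes c :: "'n::finite set \<Rightarrow> 'v::real_normed_vector"
  assumes \<delta>: "\<delta> > 0"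
    and Z: "\<And>\<epsilon>. 0 < \<epsilon> \<Longrightarrow> \<epsilon> < \<delta> \<Longrightarrow> (\<Sum>\<alpha>\<in>UNIV. if \<alpha>0 \<subseteq> \<alpha> then \<epsilon> ^ card \<alpha> *\<^sub>R c \<alpha> else 0) = 0"
  shows "c \<alpha>0 = 0"
proof -
  define h where "h \<epsilon> = (\<Sum>\<alpha>\<in>{\<alpha>. \<alpha>0 \<subseteq> \<alpha>}. \<epsilon> ^ (card \<alpha> - card \<alpha>0) *\<^sub>R c \<alpha>)" for \<epsilon> :: real
  have h0: "h 0 = c \<alpha>0"
  proof -
    have "h 0 = (\<Sum>\<alpha>\<in>{\<alpha>. \<alpha>0 \<subseteq> \<alpha>}. if \<alpha> = \<alpha>0 then c \<alpha> else 0)"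
      unfolding h_def
    proof (rule sum.cong[OF refl])
      fix \<alpha> :: "'n set" assume a: "\<alpha> \<in> {\<alpha>. \<alpha>0 \<subseteq> \<alpha>}"
      show "(0::real) ^ (card \<alpha> - card \<alpha>0) *\<^sub>R c \<alpha> = (if \<alpha> = \<alpha>0 then c \<alpha> else 0)"
      proof (cases "\<alpha> = \<alpha>0")
        case False
        then have "card \<alpha>0 < card \<alpha>" using a by (intro psubset_card_mono) auto
        then show ?thesis using False by simp
      qed simp
    qed
    also have "\<dots> = c \<alpha>0" by (simp add: sum.delta)
    finally show ?thesis .
  qed
  have "h \<epsilon> = 0" if e: "0 < \<epsilon>" "\<epsilon> < \<delta>" for \<epsilon>
  proof -
    have "(\<Sum>\<alpha>\<in>UNIV. if \<alpha>0 \<subseteq> \<alpha> then \<epsilon> ^ card \<alpha> *\<^sub>R c \<alpha> else 0) = (\<Sum>\<alpha>\<in>{\<alpha>. \<alpha>0 \<subseteq> \<alpha>}. \<epsilon> ^ card \<alpha> *\<^sub>R c \<alpha>)"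
      by (simp add: sum.If_cases Collect_conv_if)
    also have "\<dots> = (\<Sum>\<alpha>\<in>{\<alpha>. \<alpha>0 \<subseteq> \<alpha>}. \<epsilon> ^ card \<alpha>0 *\<^sub>R (\<epsilon> ^ (card \<alpha> - card \<alpha>0) *\<^sub>R c \<alpha>))"
    proof (rule sum.cong[OF refl])
      fix \<alpha> :: "'n set" assume "\<alpha> \<in> {\<alpha>. \<alpha>0 \<subseteq> \<alpha>}"
      then have "card \<alpha>0 \<le> card \<alpha>" by (intro card_mono) auto
      then show "\<epsilon> ^ card \<alpha> *\<^sub>R c \<alpha> = \<epsilon> ^ card \<alpha>0 *\<^sub>R (\<epsilon> ^ (card \<alpha> - card \<alpha>0) *\<^sub>R c \<alpha>)"
        by (simp add: power_add[symmetric])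
    qed
    also have "\<dots> = \<epsilon> ^ card \<alpha>0 *\<^sub>R h \<epsilon>" unfolding h_def by (simp add: scaleR_sum_right)
    finally show "h \<epsilon> = 0" using Z[OF e] e by simp
  qed
  then have "eventually (\<lambda>\<epsilon>. h \<epsilon> = 0) (at_right 0)"
    unfolding eventually_at_right_field using \<delta> by blast
  then have "(h \<longlongrightarrow> 0) (at_right 0)" by (rule tendsto_eventually)
  moreover have "(h \<longlongrightarrow> h 0) (at_right 0)"
  proof -
    have "continuous_on UNIV h" unfolding h_def by (intro continuous_intros)
    then show ?thesis by (meson UNIV_I continuous_on_def tendsto_within_subset subset_UNIV)
  qed
  ultimately have "h 0 = 0" using tendsto_unique[OF trivial_limit_at_right_real] by blast
  then show ?thesis using h0 by simp
qed

text \<open>Testing \<open>opL A\<close> against a column \<open>s\<close> at a point \<open>(k0, x0)\<close> of the domain of \<open>A \<alpha>0\<close>: the test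
  function is \<open>e\<^sub>s\<close> times the indicator of an \<open>\<epsilon>\<close>-box at the corner of the cell of \<open>k0 \<diamond> x0\<close>, and it is
  evaluated on a box of points \<open>k\<close> in the cell of \<open>k0\<close> whose coordinates in \<open>\<alpha>0\<close> avoid the \<open>\<epsilon>\<close>-box.
  Only the terms with \<open>\<alpha>0 \<subseteq> \<alpha>\<close> survive, and each contributes \<open>\<epsilon> ^ card \<alpha>\<close> times a column of \<open>A \<alpha>\<close>.\<close>

context
  fixes A :: "('n::finite, 'm::finite) coeffs" and p :: nat and \<alpha>0 :: "'n set"
    and k0 x0 :: "'n \<Rightarrow> real" and s :: 'm
  assumes p: "p > 0" and cA: "\<forall>\<alpha>. cellwise_const p \<alpha> (A \<alpha>)" and kx0: "(k0, x0) \<in> dom_pts \<alpha>0"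
begin

definition "base_cell i = cell_index p (k0 i)"

definition "test_cell i = (if i \<in> \<alpha>0 then cell_index p (x0 i) else base_cell i)"

definition "test_corner i = real (test_cell i) / real p"

definition "test_interval \<epsilon> i = {test_corner i ..< test_corner i + \<epsilon>}"

definition "probe_lower i = (if i \<in> \<alpha>0 then real (base_cell i) / real p + 1 / (2 * real p) else test_corner i)"

definition "probe_upper \<epsilon> i = (if i \<in> \<alpha>0 then (real (base_cell i) + 1) / real p else test_corner i + \<epsilon>)"

definition "probe_interval \<epsilon> i = {probe_lower i ..< probe_upper \<epsilon> i}"

definition "test_fun \<epsilon> y = (indicator (Pi\<^sub>E UNIV (test_interval \<epsilon>)) y :: real) *\<^sub>R (axis s 1 :: complex^'m)"

definition "corner_point \<alpha> = restrict test_corner \<alpha>"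

definition "column_vec \<alpha> = A \<alpha> k0 (corner_point \<alpha>) *v (axis s 1 :: complex^'m)"

lemma real_p_pos: "real p > 0" using p by simp

lemma base_cell_less: "base_cell i < p"
  using kx0 cell_index_less[OF p] unfolding base_cell_def dom_pts_def by (auto simp: PiE_def Pi_def)

lemma test_cell_less: "test_cell i < p"
  using kx0 cell_index_less[OF p] base_cell_less unfolding test_cell_def dom_pts_def by (auto simp: PiE_def Pi_def)

lemma test_corner_nonneg: "test_corner i \<ge> 0" unfolding test_corner_def by simp

lemma test_corner_less_1: "test_corner i < 1"
  using test_cell_less[of i] real_p_pos unfolding test_corner_def by simp

lemma test_corner_add_less: "\<epsilon> < 1 / (2 * real p) \<Longrightarrow> test_corner i + \<epsilon> < (real (test_cell i) + 1) / real p"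
proof -
  assume e: "\<epsilon> < 1 / (2 * real p)"
  have "1 / (2 * real p) \<le> 1 / real p" using real_p_pos by (simp add: frac_le)
  then show ?thesis using e unfolding test_corner_def by (simp add: add_divide_distrib)
qed

lemma corner_point_in_dom_pts: "(k0, corner_point \<alpha>) \<in> dom_pts \<alpha>"
  using kx0 test_corner_nonneg test_corner_less_1 unfolding dom_pts_def corner_point_def
  by (auto simp: PiE_def Pi_def less_imp_le)

lemma cell_index_corner_point: "i \<in> \<alpha> \<Longrightarrow> cell_index p (corner_point \<alpha> i) = test_cell i"
  using p unfolding corner_point_def test_corner_def by (simp add: cell_index_def)

lemma cell_index_test_interval: "\<epsilon> < 1 / (2 * real p) \<Longrightarrow> y \<in> test_interval \<epsilon> i \<Longrightarrow> cell_index p y = test_cell i"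
  using test_corner_add_less[of \<epsilon> i] unfolding test_interval_def by (intro cell_index_eqI[OF p]) (auto simp: test_corner_def)

lemma cell_index_probe_interval: "\<epsilon> < 1 / (2 * real p) \<Longrightarrow> y \<in> probe_interval \<epsilon> i \<Longrightarrow> cell_index p y = base_cell i"
proof -
  assume e: "\<epsilon> < 1 / (2 * real p)" and y: "y \<in> probe_interval \<epsilon> i"
  show ?thesis
  proof (cases "i \<in> \<alpha>0")
    case True
    have "real (base_cell i) / real p \<le> y"
      using y True real_p_pos unfolding probe_interval_def probe_lower_def by (auto intro: order_trans[rotated])
    moreover have "y < (real (base_cell i) + 1) / real p"
      using y True unfolding probe_interval_def probe_upper_def by auto
    ultimately show ?thesis by (rule cell_index_eqI[OF p])
  next
    case False
    then show ?thesis using cell_index_test_interval[OF e, of y i] y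
      unfolding probe_interval_def probe_lower_def probe_upper_def test_interval_def test_cell_def by auto
  qed
qed

lemma probe_interval_disjoint: "\<epsilon> < 1 / (2 * real p) \<Longrightarrow> i \<in> \<alpha>0 \<Longrightarrow> y \<in> probe_interval \<epsilon> i \<Longrightarrow> y \<notin> test_interval \<epsilon> i"
proof
  assume e: "\<epsilon> < 1 / (2 * real p)" and i: "i \<in> \<alpha>0" and y: "y \<in> probe_interval \<epsilon> i" and yR: "y \<in> test_interval \<epsilon> i"
  have "base_cell i = test_cell i"
    using cell_index_probe_interval[OF e y] cell_index_test_interval[OF e yR] by simp
  moreover have "real (base_cell i) / real p + 1 / (2 * real p) \<le> y"
    using y i unfolding probe_interval_def probe_lower_def by auto
  moreover have "y < real (test_cell i) / real p + \<epsilon>"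
    using yR unfolding test_interval_def test_corner_def by auto
  ultimately show False using e by simp
qed

lemma probe_interval_eq_test_interval: "i \<notin> \<alpha>0 \<Longrightarrow> probe_interval \<epsilon> i = test_interval \<epsilon> i"
  unfolding probe_interval_def test_interval_def probe_lower_def probe_upper_def by simp

lemma probe_bounds:
  "0 < \<epsilon> \<Longrightarrow> \<epsilon> < 1 / (2 * real p) \<Longrightarrow> 0 \<le> probe_lower i \<and> probe_lower i < probe_upper \<epsilon> i \<and> probe_upper \<epsilon> i \<le> 1"
proof -
  assume e: "0 < \<epsilon>" "\<epsilon> < 1 / (2 * real p)"
  show ?thesis
  proof (cases "i \<in> \<alpha>0")
    case True
    have "real (base_cell i) / real p + 1 / (2 * real p) < (real (base_cell i) + 1) / real p"
      using real_p_pos by (simp add: field_simps)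
    then show ?thesis using True cell_end_le_1[OF p base_cell_less] unfolding probe_lower_def probe_upper_def by simp
  next
    case False
    then show ?thesis using e test_corner_nonneg[of i] test_corner_add_less[OF e(2), of i] cell_end_le_1[OF p test_cell_less, of i]
      unfolding probe_lower_def probe_upper_def by simp
  qed
qed

lemma test_interval_bounds:
  "0 < \<epsilon> \<Longrightarrow> \<epsilon> < 1 / (2 * real p) \<Longrightarrow> 0 \<le> test_corner i \<and> test_corner i \<le> test_corner i + \<epsilon> \<and> test_corner i + \<epsilon> \<le> 1"
  using test_corner_nonneg[of i] test_corner_add_less[of \<epsilon> i] cell_end_le_1[OF p test_cell_less, of i] by simp

lemma test_box_sets: "0 < \<epsilon> \<Longrightarrow> \<epsilon> < 1 / (2 * real p) \<Longrightarrow> Pi\<^sub>E I (test_interval \<epsilon>) \<in> sets (cube I)"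
  unfolding cube_def test_interval_def using test_interval_bounds by (intro sets_PiM_I_finite sets_unitI_Ico) auto

lemma isL2_test_fun: "0 < \<epsilon> \<Longrightarrow> \<epsilon> < 1 / (2 * real p) \<Longrightarrow> isL2 (test_fun \<epsilon>)"
proof -
  assume e: "0 < \<epsilon>" "\<epsilon> < 1 / (2 * real p)"
  interpret Q: prob_space "cube (UNIV :: 'n set)" by (rule prob_space_cube)
  have m: "test_fun \<epsilon> \<in> borel_measurable (cube UNIV)"
    unfolding test_fun_def[abs_def] using test_box_sets[OF e, of UNIV] by measurable
  have "integrable (cube UNIV) (\<lambda>k. (norm (test_fun \<epsilon> k))\<^sup>2)"
  proof (rule Q.integrable_const_bound[where B=1])
    show "AE x in cube UNIV. norm ((norm (test_fun \<epsilon> x))\<^sup>2) \<le> 1"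
      by (intro AE_I2) (simp add: test_fun_def indicator_def norm_axis_one)
    show "(\<lambda>k. (norm (test_fun \<epsilon> k))\<^sup>2) \<in> borel_measurable (cube UNIV)" using m by measurable
  qed
  then show ?thesis unfolding isL2_def using m by simp
qed

lemma probe_box_in_space: "0 < \<epsilon> \<Longrightarrow> \<epsilon> < 1 / (2 * real p) \<Longrightarrow> Pi\<^sub>E UNIV (probe_interval \<epsilon>) \<subseteq> space (cube UNIV)"
  unfolding probe_interval_def space_cube using probe_bounds
  by (auto simp: PiE_def Pi_def) (meson order_trans, meson less_le_trans)

lemma emeasure_probe_box_nonzero:
  assumes e: "0 < \<epsilon>" "\<epsilon> < 1 / (2 * real p)"
  shows "emeasure (cube UNIV) (Pi\<^sub>E UNIV (probe_interval \<epsilon>)) \<noteq> 0"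
proof -
  have b: "probe_lower i < probe_upper \<epsilon> i" for i using probe_bounds[OF e] by blast
  have "emeasure (cube UNIV) (Pi\<^sub>E UNIV (probe_interval \<epsilon>)) = (\<Prod>i\<in>UNIV. ennreal (probe_upper \<epsilon> i - probe_lower i))"
    unfolding probe_interval_def by (rule emeasure_cube_box) (use probe_bounds[OF e] in \<open>auto intro: less_imp_le\<close>)
  also have "\<dots> = ennreal (\<Prod>i\<in>UNIV. (probe_upper \<epsilon> i - probe_lower i))"
    using b by (intro prod_ennreal) (auto intro: less_imp_le)
  also have "\<dots> \<noteq> 0"
  proof -
    have "(\<Prod>i\<in>UNIV. (probe_upper \<epsilon> i - probe_lower i)) > 0" by (intro prod_pos) (simp add: b)
    then show ?thesis by (simp only: ennreal_eq_0_iff not_le)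
  qed
  finally show ?thesis .
qed

lemma opL_part_test_fun_eq_zero:
  assumes e: "\<epsilon> < 1 / (2 * real p)" and k: "k \<in> Pi\<^sub>E UNIV (probe_interval \<epsilon>)" and "\<not> \<alpha>0 \<subseteq> \<alpha>"
  shows "opL_part A \<alpha> (test_fun \<epsilon>) k = 0"
proof -
  obtain i where i: "i \<in> \<alpha>0" "i \<notin> \<alpha>" using assms(3) by blast
  have "merge_pt \<alpha> k x \<notin> Pi\<^sub>E UNIV (test_interval \<epsilon>)" for x
  proof
    assume "merge_pt \<alpha> k x \<in> Pi\<^sub>E UNIV (test_interval \<epsilon>)"
    then have "merge_pt \<alpha> k x i \<in> test_interval \<epsilon> i" by (auto simp: PiE_def)
    then have "k i \<in> test_interval \<epsilon> i" using i(2) unfolding merge_pt_def by simp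
    moreover have "k i \<in> probe_interval \<epsilon> i" using k by auto
    ultimately show False using probe_interval_disjoint[OF e i(1)] by blast
  qed
  then show ?thesis unfolding opL_part_def test_fun_def by simp
qed

lemma test_integrand_eq:
  assumes e: "0 < \<epsilon>" "\<epsilon> < 1 / (2 * real p)" and k: "k \<in> Pi\<^sub>E UNIV (probe_interval \<epsilon>)"
    and "\<alpha>0 \<subseteq> \<alpha>" and x: "x \<in> space (cube \<alpha>)"
  shows "A \<alpha> k x *v test_fun \<epsilon> (merge_pt \<alpha> k x) = (indicator (Pi\<^sub>E \<alpha> (test_interval \<epsilon>)) x :: real) *\<^sub>R column_vec \<alpha>"
proof (cases "x \<in> Pi\<^sub>E \<alpha> (test_interval \<epsilon>)")
  case True
  have kS: "k i \<in> probe_interval \<epsilon> i" for i using k by auto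
  have "merge_pt \<alpha> k x i \<in> test_interval \<epsilon> i" for i
  proof (cases "i \<in> \<alpha>")
    case True
    then show ?thesis using \<open>x \<in> Pi\<^sub>E \<alpha> (test_interval \<epsilon>)\<close> unfolding merge_pt_def by auto
  next
    case False
    then have "i \<notin> \<alpha>0" using \<open>\<alpha>0 \<subseteq> \<alpha>\<close> by auto
    then show ?thesis using kS[of i] probe_interval_eq_test_interval[of i \<epsilon>] False unfolding merge_pt_def by simp
  qed
  then have mem: "merge_pt \<alpha> k x \<in> Pi\<^sub>E UNIV (test_interval \<epsilon>)" by auto
  have "same_cell p \<alpha> k x k0 (corner_point \<alpha>)"
    unfolding same_cell_def
  proof (intro conjI ballI allI)
    fix i
    show "cell_index p (k i) = cell_index p (k0 i)"
      using cell_index_probe_interval[OF e(2) kS[of i]] unfolding base_cell_def .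
  next
    fix i assume i: "i \<in> \<alpha>"
    have "x i \<in> test_interval \<epsilon> i" using True i by (auto simp: PiE_def)
    then show "cell_index p (x i) = cell_index p (corner_point \<alpha> i)"
      using cell_index_test_interval[OF e(2)] cell_index_corner_point[OF i] by simp
  qed
  moreover have "(k, x) \<in> dom_pts \<alpha>"
    by (rule space_pair_in_dom_pts[OF subsetD[OF probe_box_in_space[OF e] k] x])
  ultimately have "A \<alpha> k x = A \<alpha> k0 (corner_point \<alpha>)"
    using cA corner_point_in_dom_pts unfolding cellwise_const_def by blast
  then show ?thesis using mem True unfolding test_fun_def column_vec_def by simp
next
  case False
  then have "merge_pt \<alpha> k x \<notin> Pi\<^sub>E UNIV (test_interval \<epsilon>)"
    using x unfolding merge_pt_def space_cube by (auto simp: PiE_def Pi_def extensional_def)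
  then show ?thesis using False unfolding test_fun_def by simp
qed

lemma opL_part_test_fun:
  assumes e: "0 < \<epsilon>" "\<epsilon> < 1 / (2 * real p)" and k: "k \<in> Pi\<^sub>E UNIV (probe_interval \<epsilon>)" and "\<alpha>0 \<subseteq> \<alpha>"
  shows "opL_part A \<alpha> (test_fun \<epsilon>) k = \<epsilon> ^ card \<alpha> *\<^sub>R column_vec \<alpha>"
proof -
  interpret Ca: prob_space "cube \<alpha>" by (rule prob_space_cube)
  have box: "Pi\<^sub>E \<alpha> (test_interval \<epsilon>) \<inter> space (cube \<alpha>) = Pi\<^sub>E \<alpha> (\<lambda>i. {test_corner i ..< test_corner i + \<epsilon>})"
    using test_interval_bounds[OF e] unfolding test_interval_def space_cube
    by (auto simp: PiE_def Pi_def) (meson order_trans, meson less_le_trans)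
  have "integrable (cube \<alpha>) (indicator (Pi\<^sub>E \<alpha> (test_interval \<epsilon>)) :: _ \<Rightarrow> real)"
    using test_box_sets[OF e, of \<alpha>] by (intro Ca.integrable_const_bound[where B=1]) (auto simp: indicator_def)
  then have "opL_part A \<alpha> (test_fun \<epsilon>) k = measure (cube \<alpha>) (Pi\<^sub>E \<alpha> (test_interval \<epsilon>) \<inter> space (cube \<alpha>)) *\<^sub>R column_vec \<alpha>"
    unfolding opL_part_def using test_integrand_eq[OF e k \<open>\<alpha>0 \<subseteq> \<alpha>\<close>]
    by (simp cong: Bochner_Integration.integral_cong)
  also have "measure (cube \<alpha>) (Pi\<^sub>E \<alpha> (test_interval \<epsilon>) \<inter> space (cube \<alpha>)) = \<epsilon> ^ card \<alpha>"
    unfolding box using measure_cube_box[of \<alpha> test_corner "\<lambda>i. test_corner i + \<epsilon>"] test_interval_bounds[OF e] by simp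
  finally show ?thesis .
qed

lemma test_sum_eq_zero:
  assumes Z: "\<forall>u. isL2 u \<longrightarrow> (AE k in cube UNIV. opL A u k = 0)" and e: "0 < \<epsilon>" "\<epsilon> < 1 / (2 * real p)"
  shows "(\<Sum>\<alpha>\<in>UNIV. if \<alpha>0 \<subseteq> \<alpha> then \<epsilon> ^ card \<alpha> *\<^sub>R column_vec \<alpha> else 0) = 0"
proof -
  have "AE k in cube UNIV. opL A (test_fun \<epsilon>) k = 0" using Z isL2_test_fun[OF e] by blast
  then obtain k where k: "k \<in> Pi\<^sub>E UNIV (probe_interval \<epsilon>)" and z: "opL A (test_fun \<epsilon>) k = 0"
    using AE_imp_ex_in_nonnull[OF _ probe_box_in_space[OF e] emeasure_probe_box_nonzero[OF e]] by blast
  have "opL A (test_fun \<epsilon>) k = (\<Sum>\<alpha>\<in>UNIV. if \<alpha>0 \<subseteq> \<alpha> then \<epsilon> ^ card \<alpha> *\<^sub>R column_vec \<alpha> else 0)"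
    unfolding opL_eq_sum_opL_part using opL_part_test_fun[OF e k] opL_part_test_fun_eq_zero[OF e(2) k]
    by (intro sum.cong) auto
  then show ?thesis using z by simp
qed

lemma coeff_column_eq_zero:
  assumes Z: "\<forall>u. isL2 u \<longrightarrow> (AE k in cube UNIV. opL A u k = 0)"
  shows "A \<alpha>0 k0 x0 *v (axis s 1 :: complex^'m) = 0"
proof -
  have "same_cell p \<alpha>0 k0 x0 k0 (corner_point \<alpha>0)"
    unfolding same_cell_def using cell_index_corner_point by (auto simp: test_cell_def)
  then have "A \<alpha>0 k0 x0 = A \<alpha>0 k0 (corner_point \<alpha>0)"
    using cA kx0 corner_point_in_dom_pts unfolding cellwise_const_def by blast
  moreover have "column_vec \<alpha>0 = 0"
    by (rule superset_power_sum_eq_zero_imp[where \<delta> = "1 / (2 * real p)"])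
      (use real_p_pos test_sum_eq_zero[OF Z] in auto)
  ultimately show ?thesis unfolding column_vec_def by simp
qed

end

lemma opL_zero_imp_normL_zero:
  fixes A :: "('n::finite, 'm::finite) coeffs"
  assumes p: "p > 0" and cA: "\<forall>\<alpha>. cellwise_const p \<alpha> (A \<alpha>)"
    and Z: "\<forall>u. isL2 u \<longrightarrow> (AE k in cube UNIV. opL A u k = 0)"
  shows "normL A = 0"
proof -
  have A0: "A \<alpha> k x = 0" if kx: "(k, x) \<in> dom_pts \<alpha>" for \<alpha> k x
  proof -
    have "A \<alpha> k x *v (axis s 1 :: complex^'m) = 0" for s using coeff_column_eq_zero[OF p cA kx Z] .
    then have "A \<alpha> k x $ i $ s = 0" for i s using matrix_vector_mult_axis_nth[of "A \<alpha> k x" s i] by simp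
    then show ?thesis by (simp add: vec_eq_iff)
  qed
  have "coeff_norm A \<alpha> = 0" for \<alpha>
  proof (rule antisym)
    show "coeff_norm A \<alpha> \<le> 0" by (rule coeff_norm_le[OF p cA]) (simp add: row_norm_def A0)
    show "0 \<le> coeff_norm A \<alpha>" by (rule coeff_norm_nonneg[OF p cA])
  qed
  then show ?thesis unfolding normL_eq_sum_coeff_norm by simp
qed

theorem theorem1:
  fixes p :: nat
  assumes "p > 0"
  shows
    "(\<forall>A B :: ('n::finite, 'm::finite) coeffs. is_coeffs p A \<longrightarrow> is_coeffs p B \<longrightarrow>
        is_coeffs p (addL A B) \<and> normL (addL A B) \<le> normL A + normL B)
   \<and> (\<forall>(A :: ('n, 'm) coeffs) c. is_coeffs p A \<longrightarrow>
        is_coeffs p (scaleL c A) \<and> normL (scaleL c A) = norm c * normL A)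
   \<and> (\<forall>A :: ('n, 'm) coeffs. is_coeffs p A \<longrightarrow>
        normL A \<ge> 0 \<and>
        (normL A = 0 \<longleftrightarrow> (\<forall>u. isL2 u \<longrightarrow> (AE k in cube UNIV. opL A u k = 0))))
   \<and> (\<exists>C. \<forall>A :: ('n, 'm) coeffs. is_coeffs p A \<longrightarrow> (\<forall>u. isL2 u \<longrightarrow>
        isL2 (opL A u) \<and> L2norm (opL A u) \<le> C * normL A * L2norm u))
   \<and> (\<forall>(S :: nat \<Rightarrow> ('n, 'm) coeffs) A. (\<forall>n. is_coeffs p (S n)) \<longrightarrow> is_coeffs p A \<longrightarrow>
        ((\<lambda>n. normL (diffL (S n) A)) \<longlonglongrightarrow> 0 \<longleftrightarrow>
         (\<forall>\<alpha>. uniform_limit (dom_pts \<alpha>) (\<lambda>n (k, x). S n \<alpha> k x) (\<lambda>(k, x). A \<alpha> k x) sequentially)))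
   \<and> (\<forall>S :: nat \<Rightarrow> ('n, 'm) coeffs. (\<forall>n. is_coeffs p (S n)) \<longrightarrow>
        (\<forall>e>0. \<exists>n0. \<forall>m\<ge>n0. \<forall>n\<ge>n0. normL (diffL (S m) (S n)) < e) \<longrightarrow>
        (\<exists>A. is_coeffs p A \<and> (\<lambda>n. normL (diffL (S n) A)) \<longlonglongrightarrow> 0))
   \<and> (\<forall>A B :: ('n, 'm) coeffs. is_coeffs p A \<longrightarrow> is_coeffs p B \<longrightarrow>
        (\<exists>C. is_coeffs p C \<and>
             (\<forall>u. isL2 u \<longrightarrow> (AE k in cube UNIV. opL C u k = opL A (opL B u) k)) \<and>
             normL C \<le> normL A * normL B))"
proof -
  note cellwise = is_coeffs_iff_cellwise_const[OF assms]
  show ?thesis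
    apply (intro conjI)
    subgoal using addL_normL_le[OF assms] by blast
    subgoal using scaleL_normL_eq[OF assms] by blast
    subgoal using normL_nonneg[OF assms] normL_zero_imp_opL_zero[OF assms] opL_zero_imp_normL_zero[OF assms] cellwise
      by blast
    subgoal using opL_L2_bound[OF assms] cellwise by blast
    subgoal using normL_tendsto_iff_uniform_limit[OF assms] cellwise by blast
    subgoal using normL_Cauchy_imp_convergent[OF assms] by blast
    subgoal using opL_comp_coeffs[OF assms] by blast
    done
qed

end
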